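(* Let $\mathbb{X}$ be a topological space with viable base $\Omega_0$, $\mathbb{D}$ a bc-domain with basis $D_0$, and let $f=\bigsqcup_{i\in I}b_i\chi_{\mathcal{O}_{{\downarrow}W_i}}$ and $g=\bigsqcup_{j\in J}b'_j\chi_{\mathcal{O}_{{\downarrow}W'_j}}$ be elements of $\widehat{\mathbb{B}}$ (finite consistent families with $W_i,W'_j\in\Omega_0$, $b_i,b'_j\in D_0$). Then for each $i\in I$ there is $U_i\in\Omega_0$ with $\mathcal{O}_{{\downarrow}U_i}=g^{-1}(\twoheaduparrow b_i)$, and $f\ll g$ in $[\widehat{\mathbb{X}}_{\Omega_0}\to\mathbb{D}]$ if and only if $W_i\subseteq U_i$ for all $i\in I$.
   Context: A viable base of $\mathbb{X}=(X,\tau_{\mathbb{X}})$ is a family $\Omega_0\subseteq\tau_{\mathbb{X}}$ closed under finite unions and finite intersections (so $\emptyset,X\in\Omega_0$) which is a base of $\tau_{\mathbb{X}}$. ${\downarrow}W=\{U\in\Omega_0:U\subseteq W\}$. $\mathrm{Idl}(\Omega_0)$ is the set of ideals (nonempty, downward closed, directed subsets) of $(\Omega_0,\subseteq)$, ordered by inclusion; a complete lattice. A completely prime filter of a complete lattice $L$ is a nonempty upward closed $F\subseteq L$ closed under binary meets with $\bigvee A\in F\Rightarrow A\cap F\neq\emptyset$. $\widehat{\mathbb{X}}_{\Omega_0}$ is the set of completely prime filters of $\mathrm{Idl}(\Omega_0)$ with topology whose open sets are exactly $\mathcal{O}_I=\{y: I\in y\}$. A bc-domain is a continuous dcpo with least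 element $\bot$ in which bounded subsets have joins; $x\ll y$ is the way-below relation; $\twoheaduparrow b=\{d: b\ll d\}$. $[\widehat{\mathbb{X}}_{\Omega_0}\to\mathbb{D}]$ is the set of functions continuous into the Scott topology of $D$, ordered pointwise. $b\chi_O$ has value $b$ on $O$ and $\bot$ elsewhere; a family $\{b_i\chi_{O_i}\}$ is consistent if every subfamily with nonempty common intersection of the $O_i$ has bounded values $b_i$; $\widehat{\mathbb{B}}$ is the set of pointwise joins of finite consistent families $\{b_i\chi_{\mathcal{O}_{{\downarrow}W_i}}\}$ with $W_i\in\Omega_0$, $b_i\in D_0$. *)

theory Defs
  imports "HOL-Analysis.Analysis"
begin

definition vb_directed :: "'b::order set \<Rightarrow> bool" where
  "vb_directed S \<longleftrightarrow> S \<noteq> {} \<and> (\<forall>x\<in>S. \<forall>y\<in>S. \<exists>z\<in>S. x \<le> z \<and> y \<le> z)"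

definition is_lub_in :: "'b::order set \<Rightarrow> 'b set \<Rightarrow> 'b \<Rightarrow> bool" where
  "is_lub_in P A s \<longleftrightarrow> s \<in> P \<and> (\<forall>a\<in>A. a \<le> s) \<and> (\<forall>u\<in>P. (\<forall>a\<in>A. a \<le> u) \<longrightarrow> s \<le> u)"

definition is_glb_in :: "'b::order set \<Rightarrow> 'b set \<Rightarrow> 'b \<Rightarrow> bool" where
  "is_glb_in P A m \<longleftrightarrow> m \<in> P \<and> (\<forall>a\<in>A. m \<le> a) \<and> (\<forall>u\<in>P. (\<forall>a\<in>A. u \<le> a) \<longrightarrow> u \<le> m)"

definition way_below_in :: "'b::order set \<Rightarrow> 'b \<Rightarrow> 'b \<Rightarrow> bool" where
  "way_below_in P x y \<longleftrightarrow> x \<in> P \<and> y \<in> P \<and>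
     (\<forall>S. S \<subseteq> P \<longrightarrow> vb_directed S \<longrightarrow>
        (\<forall>s. is_lub_in P S s \<longrightarrow> y \<le> s \<longrightarrow> (\<exists>d\<in>S. x \<le> d)))"

definition vb_lub :: "'b::order set \<Rightarrow> 'b" where
  "vb_lub A = (THE s. is_lub_in UNIV A s)"

text \<open>The domain D is the whole type 'd (with least element bot); D0 is the basis.\<close>
definition bc_domain_with_basis :: "'d::order_bot set \<Rightarrow> bool" where
  "bc_domain_with_basis D0 \<longleftrightarrow>
     (\<forall>S::'d set. vb_directed S \<longrightarrow> (\<exists>s. is_lub_in UNIV S s)) \<and>
     (\<forall>x. vb_directed {b \<in> D0. way_below_in UNIV b x} \<and>
          is_lub_in UNIV {b \<in> D0. way_below_in UNIV b x} x) \<and>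
     (\<forall>A::'d set. (\<exists>u. \<forall>a\<in>A. a \<le> u) \<longrightarrow> (\<exists>s. is_lub_in UNIV A s))"

definition scott_open :: "'d::order set \<Rightarrow> bool" where
  "scott_open V \<longleftrightarrow> (\<forall>x\<in>V. \<forall>y. x \<le> y \<longrightarrow> y \<in> V) \<and>
     (\<forall>S. vb_directed S \<longrightarrow> (\<forall>s. is_lub_in UNIV S s \<longrightarrow> s \<in> V \<longrightarrow> S \<inter> V \<noteq> {}))"

definition viable_base :: "'a topology \<Rightarrow> 'a set set \<Rightarrow> bool" where
  "viable_base X \<Omega> \<longleftrightarrow> (\<forall>U\<in>\<Omega>. openin X U) \<and>
     {} \<in> \<Omega> \<and> topspace X \<in> \<Omega> \<and>
     (\<forall>U\<in>\<Omega>. \<forall>V\<in>\<Omega>. U \<union> V \<in> \<Omega> \<and> U \<inter> V \<in> \<Omega>) \<and>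
     (\<forall>U. openin X U \<longrightarrow> (\<exists>F. F \<subseteq> \<Omega> \<and> \<Union>F = U))"

definition vb_down :: "'a set set \<Rightarrow> 'a set \<Rightarrow> 'a set set" where
  "vb_down \<Omega> W = {U \<in> \<Omega>. U \<subseteq> W}"

definition Idl :: "'a set set \<Rightarrow> 'a set set set" where
  "Idl \<Omega> = {I. I \<subseteq> \<Omega> \<and> I \<noteq> {} \<and> (\<forall>U\<in>I. \<forall>V\<in>\<Omega>. V \<subseteq> U \<longrightarrow> V \<in> I) \<and>
                (\<forall>U\<in>I. \<forall>V\<in>I. \<exists>Z\<in>I. U \<subseteq> Z \<and> V \<subseteq> Z)}"

definition compl_prime_filter :: "'b::order set \<Rightarrow> 'b set \<Rightarrow> bool" where
  "compl_prime_filter L F \<longleftrightarrow> F \<subseteq> L \<and> F \<noteq> {} \<and>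
     (\<forall>a\<in>F. \<forall>b\<in>L. a \<le> b \<longrightarrow> b \<in> F) \<and>
     (\<forall>a\<in>F. \<forall>b\<in>F. \<forall>m. is_glb_in L {a, b} m \<longrightarrow> m \<in> F) \<and>
     (\<forall>A. A \<subseteq> L \<longrightarrow> (\<forall>s. is_lub_in L A s \<longrightarrow> s \<in> F \<longrightarrow> A \<inter> F \<noteq> {}))"

definition hat_pts :: "'a set set \<Rightarrow> 'a set set set set" where
  "hat_pts \<Omega> = {F. compl_prime_filter (Idl \<Omega>) F}"

definition hatO :: "'a set set \<Rightarrow> 'a set set \<Rightarrow> 'a set set set set" where
  "hatO \<Omega> I = {y \<in> hat_pts \<Omega>. I \<in> y}"

text \<open>Continuity from \<open>\<widehat>X_\<Omega>\<close> (opens exactly the O_I) into the Scott topology of D.\<close>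
definition hat_cont :: "'a set set \<Rightarrow> ('a set set set \<Rightarrow> 'd::order_bot) \<Rightarrow> bool" where
  "hat_cont \<Omega> f \<longleftrightarrow> (\<forall>V. scott_open V \<longrightarrow>
      (\<exists>I\<in>Idl \<Omega>. {y \<in> hat_pts \<Omega>. f y \<in> V} = hatO \<Omega> I))"

text \<open>The function space [\<open>\<widehat>X_\<Omega>\<close> \<rightarrow> D], functions taken extensionally (value bot
  outside the points), ordered pointwise.\<close>
definition fun_space :: "'a set set \<Rightarrow> ('a set set set \<Rightarrow> 'd::order_bot) set" where
  "fun_space \<Omega> = {f. hat_cont \<Omega> f \<and> (\<forall>y. y \<notin> hat_pts \<Omega> \<longrightarrow> f y = bot)}"

definition consistent_family ::
  "'a set set \<Rightarrow> 'i set \<Rightarrow> ('i \<Rightarrow> 'a set) \<Rightarrow> ('i \<Rightarrow> 'd::order_bot) \<Rightarrow> bool" where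
  "consistent_family \<Omega> I W b \<longleftrightarrow> (\<forall>K. K \<subseteq> I \<longrightarrow>
      (\<Inter>i\<in>K. hatO \<Omega> (vb_down \<Omega> (W i))) \<noteq> {} \<longrightarrow> (\<exists>u. \<forall>i\<in>K. b i \<le> u))"

definition step_join ::
  "'a set set \<Rightarrow> 'i set \<Rightarrow> ('i \<Rightarrow> 'a set) \<Rightarrow> ('i \<Rightarrow> 'd::order_bot) \<Rightarrow> 'a set set set \<Rightarrow> 'd" where
  "step_join \<Omega> I W b = (\<lambda>y. vb_lub {b i | i. i \<in> I \<and> y \<in> hatO \<Omega> (vb_down \<Omega> (W i))})"

end

theory Submission imports Defs begin

text \<open>A step function is continuous: the preimage of an upper set is a finite union of finite
  intersections of the basic opens \<open>O_{\<down>W'_j}\<close>, hence of the form \<open>O_{\<down>U}\<close>. If \<open>f \<ll> g\<close>, then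
  \<open>f\<close> lies below one of the step functions obtained from \<open>g\<close> by replacing each \<open>b'_j\<close> by a basis
  element way below it; so \<open>b_i \<ll> g\<close> on \<open>O_{\<down>W_i}\<close>, i.e. \<open>O_{\<down>W_i} \<subseteq> O_{\<down>U_i}\<close>, and the points
  given by neighbourhood filters of points of \<open>X\<close> turn this into \<open>W_i \<subseteq> U_i\<close>. Conversely, for a
  directed family \<open>S\<close> with join above \<open>g\<close>, the \<open>V \<in> \<Omega>\<close> such that some member of \<open>S\<close> dominates
  \<open>b_i\<close> on \<open>O_{\<down>V}\<close> form an ideal. It contains \<open>W_i\<close>: otherwise a prime filter (Zorn) containing
  \<open>W_i\<close> and avoiding the ideal yields a point of \<open>O_{\<down>W_i}\<close> at which, by continuity of the members
  of \<open>S\<close>, the ideal is met after all.\<close>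

lemma is_lub_inI:
  assumes "s \<in> P" "\<And>a. a \<in> A \<Longrightarrow> a \<le> s" "\<And>u. u \<in> P \<Longrightarrow> (\<And>a. a \<in> A \<Longrightarrow> a \<le> u) \<Longrightarrow> s \<le> u"
  shows "is_lub_in P A s"
  unfolding is_lub_in_def using assms by blast

lemma is_lub_inD:
  assumes "is_lub_in P A s"
  shows "s \<in> P" "\<And>a. a \<in> A \<Longrightarrow> a \<le> s" "\<And>u. u \<in> P \<Longrightarrow> (\<And>a. a \<in> A \<Longrightarrow> a \<le> u) \<Longrightarrow> s \<le> u"
  using assms unfolding is_lub_in_def by blast+

lemma is_lub_in_unique: "is_lub_in P A s \<Longrightarrow> is_lub_in P A t \<Longrightarrow> s = t"
  unfolding is_lub_in_def by (meson order.antisym)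

lemma viable_baseD:
  assumes "viable_base X \<Omega>"
  shows "{} \<in> \<Omega>" "topspace X \<in> \<Omega>" "\<And>U V. U \<in> \<Omega> \<Longrightarrow> V \<in> \<Omega> \<Longrightarrow> U \<union> V \<in> \<Omega>"
    "\<And>U V. U \<in> \<Omega> \<Longrightarrow> V \<in> \<Omega> \<Longrightarrow> U \<inter> V \<in> \<Omega>" "\<And>U. U \<in> \<Omega> \<Longrightarrow> U \<subseteq> topspace X"
  using assms unfolding viable_base_def by (auto simp: openin_subset)

lemma viable_base_Union:
  assumes "viable_base X \<Omega>" "finite F" "F \<subseteq> \<Omega>" shows "\<Union>F \<in> \<Omega>"
  using assms(2,3) by (induction F rule: finite_induct) (auto simp: viable_baseD[OF assms(1)])

text \<open>The factor \<open>topspace X\<close> makes the empty intersection \<open>topspace X\<close> rather than \<open>UNIV\<close>.\<close>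
lemma viable_base_Inter:
  assumes "viable_base X \<Omega>" "finite K" "W ` K \<subseteq> \<Omega>" shows "topspace X \<inter> \<Inter>(W ` K) \<in> \<Omega>"
  using assms(2,3)
proof (induction K rule: finite_induct)
  case empty then show ?case using viable_baseD[OF assms(1)] by simp
next
  case (insert x F)
  have "topspace X \<inter> \<Inter>(W ` insert x F) = W x \<inter> (topspace X \<inter> \<Inter>(W ` F))" by auto
  then show ?case using insert viable_baseD[OF assms(1)] by auto
qed

section \<open>Ideals of a viable base\<close>

lemma IdlI:
  assumes "I \<subseteq> \<Omega>" "{} \<in> I" "\<And>U V. U \<in> I \<Longrightarrow> V \<in> \<Omega> \<Longrightarrow> V \<subseteq> U \<Longrightarrow> V \<in> I"
    "\<And>U V. U \<in> I \<Longrightarrow> V \<in> I \<Longrightarrow> \<exists>Z\<in>I. U \<subseteq> Z \<and> V \<subseteq> Z"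
  shows "I \<in> Idl \<Omega>"
  using assms unfolding Idl_def by blast

lemma IdlD:
  assumes "I \<in> Idl \<Omega>"
  shows "I \<subseteq> \<Omega>" "I \<noteq> {}" "\<And>U V. U \<in> I \<Longrightarrow> V \<in> \<Omega> \<Longrightarrow> V \<subseteq> U \<Longrightarrow> V \<in> I"
    "\<And>U V. U \<in> I \<Longrightarrow> V \<in> I \<Longrightarrow> \<exists>Z\<in>I. U \<subseteq> Z \<and> V \<subseteq> Z"
  using assms unfolding Idl_def by auto

lemma empty_in_Idl: assumes "I \<in> Idl \<Omega>" "{} \<in> \<Omega>" shows "{} \<in> I"
  using IdlD(2,3)[OF assms(1)] assms(2) by blast

lemma Un_in_Idl:
  assumes "viable_base X \<Omega>" "I \<in> Idl \<Omega>" "U \<in> I" "V \<in> I" shows "U \<union> V \<in> I"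
proof -
  obtain Z where "Z \<in> I" "U \<subseteq> Z" "V \<subseteq> Z" using IdlD(4)[OF assms(2-4)] by blast
  moreover have "U \<union> V \<in> \<Omega>" using IdlD(1)[OF assms(2)] assms(3,4) viable_baseD(3)[OF assms(1)] by blast
  ultimately show ?thesis using IdlD(3)[OF assms(2)] by blast
qed

lemma Union_in_Idl:
  assumes "viable_base X \<Omega>" "I \<in> Idl \<Omega>" "finite F" "F \<subseteq> I" shows "\<Union>F \<in> I"
  using assms(3,4)
  by (induction F rule: finite_induct)
    (auto intro: empty_in_Idl[OF assms(2)] viable_baseD[OF assms(1)] Un_in_Idl[OF assms(1,2)])

lemma vb_down_in_Idl: assumes "viable_base X \<Omega>" "U \<in> \<Omega>" shows "vb_down \<Omega> U \<in> Idl \<Omega>"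
  unfolding Idl_def vb_down_def using viable_baseD[OF assms(1)] assms(2) by auto

lemma Omega_in_Idl: assumes "viable_base X \<Omega>" shows "\<Omega> \<in> Idl \<Omega>"
  unfolding Idl_def using viable_baseD[OF assms] by blast

lemma vb_down_topspace: assumes "viable_base X \<Omega>" shows "vb_down \<Omega> (topspace X) = \<Omega>"
  unfolding vb_down_def using viable_baseD(5)[OF assms] by auto

lemma Idl_Int:
  assumes "viable_base X \<Omega>" "I \<in> Idl \<Omega>" "J \<in> Idl \<Omega>" shows "I \<inter> J \<in> Idl \<Omega>"
proof (rule IdlI)
  show "I \<inter> J \<subseteq> \<Omega>" using IdlD(1)[OF assms(2)] by blast
  show "{} \<in> I \<inter> J" using empty_in_Idl assms viable_baseD(1)[OF assms(1)] by blast
  show "V \<in> I \<inter> J" if "U \<in> I \<inter> J" "V \<in> \<Omega>" "V \<subseteq> U" for U V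
    using IdlD(3)[OF assms(2)] IdlD(3)[OF assms(3)] that by blast
  show "\<exists>Z\<in>I \<inter> J. U \<subseteq> Z \<and> V \<subseteq> Z" if "U \<in> I \<inter> J" "V \<in> I \<inter> J" for U V
    using Un_in_Idl[OF assms(1,2), of U V] Un_in_Idl[OF assms(1,3), of U V] that by blast
qed

definition ideal_gen :: "'a set set \<Rightarrow> 'a set set set \<Rightarrow> 'a set set" where
  "ideal_gen \<Omega> A = {V \<in> \<Omega>. \<exists>F. finite F \<and> F \<subseteq> \<Union>A \<and> V \<subseteq> \<Union>F}"

lemma ideal_gen_in_Idl:
  assumes "viable_base X \<Omega>" "A \<subseteq> Idl \<Omega>" shows "ideal_gen \<Omega> A \<in> Idl \<Omega>"
proof (rule IdlI)
  show "ideal_gen \<Omega> A \<subseteq> \<Omega>" unfolding ideal_gen_def by blast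
  show "{} \<in> ideal_gen \<Omega> A"
    unfolding ideal_gen_def using viable_baseD(1)[OF assms(1)] by blast
  show "V \<in> ideal_gen \<Omega> A" if "U \<in> ideal_gen \<Omega> A" "V \<in> \<Omega>" "V \<subseteq> U" for U V
    using that unfolding ideal_gen_def by blast
  show "\<exists>Z\<in>ideal_gen \<Omega> A. U \<subseteq> Z \<and> V \<subseteq> Z"
    if UV: "U \<in> ideal_gen \<Omega> A" "V \<in> ideal_gen \<Omega> A" for U V
  proof -
    obtain F G where "U \<in> \<Omega>" "finite F" "F \<subseteq> \<Union>A" "U \<subseteq> \<Union>F"
      and "V \<in> \<Omega>" "finite G" "G \<subseteq> \<Union>A" "V \<subseteq> \<Union>G"
      using UV unfolding ideal_gen_def by blast
    then have "U \<union> V \<in> ideal_gen \<Omega> A"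
      unfolding ideal_gen_def using viable_baseD(3)[OF assms(1)]
      by (intro CollectI conjI exI[of _ "F \<union> G"]) auto
    then show ?thesis by blast
  qed
qed

lemma is_lub_in_ideal_gen:
  assumes "viable_base X \<Omega>" "A \<subseteq> Idl \<Omega>" shows "is_lub_in (Idl \<Omega>) A (ideal_gen \<Omega> A)"
  unfolding is_lub_in_def
proof (intro conjI ballI impI)
  show "ideal_gen \<Omega> A \<in> Idl \<Omega>" by (rule ideal_gen_in_Idl[OF assms])
  show "a \<le> ideal_gen \<Omega> A" if "a \<in> A" for a
    using that assms(2) IdlD(1) unfolding ideal_gen_def
    by (auto intro!: exI[of _ "{_}"])
  fix u assume u: "u \<in> Idl \<Omega>" "\<forall>a\<in>A. a \<le> u"
  show "ideal_gen \<Omega> A \<le> u"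
  proof
    fix V assume "V \<in> ideal_gen \<Omega> A"
    then obtain F where F: "V \<in> \<Omega>" "finite F" "F \<subseteq> \<Union>A" "V \<subseteq> \<Union>F"
      unfolding ideal_gen_def by blast
    have "\<Union>F \<in> u" using Union_in_Idl[OF assms(1) u(1) F(2)] F(3) u(2) by blast
    then show "V \<in> u" using IdlD(3)[OF u(1) _ F(1,4)] by blast
  qed
qed

section \<open>Points of \<open>\<widehat>X\<close> and the opens \<open>O_{\<down>W}\<close>\<close>

lemma hat_ptsD:
  assumes "y \<in> hat_pts \<Omega>"
  shows "y \<subseteq> Idl \<Omega>" "y \<noteq> {}" "\<And>a b. a \<in> y \<Longrightarrow> b \<in> Idl \<Omega> \<Longrightarrow> a \<subseteq> b \<Longrightarrow> b \<in> y"
    "\<And>a b m. a \<in> y \<Longrightarrow> b \<in> y \<Longrightarrow> is_glb_in (Idl \<Omega>) {a, b} m \<Longrightarrow> m \<in> y"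
    "\<And>A s. A \<subseteq> Idl \<Omega> \<Longrightarrow> is_lub_in (Idl \<Omega>) A s \<Longrightarrow> s \<in> y \<Longrightarrow> A \<inter> y \<noteq> {}"
proof -
  have c: "compl_prime_filter (Idl \<Omega>) y" using assms by (simp add: hat_pts_def)
  then have H: "y \<subseteq> Idl \<Omega> \<and> y \<noteq> {} \<and> (\<forall>a\<in>y. \<forall>b\<in>Idl \<Omega>. a \<le> b \<longrightarrow> b \<in> y) \<and>
     (\<forall>a\<in>y. \<forall>b\<in>y. \<forall>m. is_glb_in (Idl \<Omega>) {a, b} m \<longrightarrow> m \<in> y) \<and>
     (\<forall>A. A \<subseteq> Idl \<Omega> \<longrightarrow> (\<forall>s. is_lub_in (Idl \<Omega>) A s \<longrightarrow> s \<in> y \<longrightarrow> A \<inter> y \<noteq> {}))"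
    unfolding compl_prime_filter_def .
  show "y \<subseteq> Idl \<Omega>" using H by (rule conjunct1)
  show "y \<noteq> {}" using H[THEN conjunct2] by (rule conjunct1)
  show "\<And>a b. a \<in> y \<Longrightarrow> b \<in> Idl \<Omega> \<Longrightarrow> a \<subseteq> b \<Longrightarrow> b \<in> y"
  proof -
    fix a b assume "a \<in> y" "b \<in> Idl \<Omega>" "a \<subseteq> b"
    moreover have "\<forall>a\<in>y. \<forall>b\<in>Idl \<Omega>. a \<le> b \<longrightarrow> b \<in> y" using H[THEN conjunct2, THEN conjunct2] by (rule conjunct1)
    ultimately show "b \<in> y" by (elim ballE impE) auto
  qed
  show "\<And>a b m. a \<in> y \<Longrightarrow> b \<in> y \<Longrightarrow> is_glb_in (Idl \<Omega>) {a, b} m \<Longrightarrow> m \<in> y"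
  proof -
    fix a b m assume "a \<in> y" "b \<in> y" "is_glb_in (Idl \<Omega>) {a, b} m"
    moreover have "\<forall>a\<in>y. \<forall>b\<in>y. \<forall>m. is_glb_in (Idl \<Omega>) {a, b} m \<longrightarrow> m \<in> y"
      using H[THEN conjunct2, THEN conjunct2, THEN conjunct2] by (rule conjunct1)
    ultimately show "m \<in> y" by (elim ballE allE impE) auto
  qed
  show "\<And>A s. A \<subseteq> Idl \<Omega> \<Longrightarrow> is_lub_in (Idl \<Omega>) A s \<Longrightarrow> s \<in> y \<Longrightarrow> A \<inter> y \<noteq> {}"
  proof -
    fix A s assume "A \<subseteq> Idl \<Omega>" "is_lub_in (Idl \<Omega>) A s" "s \<in> y"
    moreover have "\<forall>A. A \<subseteq> Idl \<Omega> \<longrightarrow> (\<forall>s. is_lub_in (Idl \<Omega>) A s \<longrightarrow> s \<in> y \<longrightarrow> A \<inter> y \<noteq> {})"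
      using H[THEN conjunct2, THEN conjunct2, THEN conjunct2] by (rule conjunct2)
    ultimately show "A \<inter> y \<noteq> {}" by (elim allE impE) auto
  qed
qed

lemma Omega_in_hat_pt: assumes "viable_base X \<Omega>" "y \<in> hat_pts \<Omega>" shows "\<Omega> \<in> y"
proof -
  obtain a where "a \<in> y" using hat_ptsD(2)[OF assms(2)] by blast
  moreover have "a \<subseteq> \<Omega>" using calculation hat_ptsD(1)[OF assms(2)] IdlD(1) by blast
  ultimately show ?thesis using hat_ptsD(3)[OF assms(2)] Omega_in_Idl[OF assms(1)] by blast
qed

lemma Int_in_hat_pt:
  assumes "viable_base X \<Omega>" "y \<in> hat_pts \<Omega>" "I \<in> y" "J \<in> y" shows "I \<inter> J \<in> y"
proof -
  have "I \<in> Idl \<Omega>" "J \<in> Idl \<Omega>" using assms hat_ptsD(1) by blast+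
  then have "is_glb_in (Idl \<Omega>) {I, J} (I \<inter> J)"
    unfolding is_glb_in_def using Idl_Int[OF assms(1)] by auto
  then show ?thesis using hat_ptsD(4)[OF assms(2-4)] by blast
qed

lemma ideal_gen_in_hat_ptD:
  assumes "viable_base X \<Omega>" "y \<in> hat_pts \<Omega>" "A \<subseteq> Idl \<Omega>" "ideal_gen \<Omega> A \<in> y"
  shows "\<exists>a\<in>A. a \<in> y"
  using hat_ptsD(5)[OF assms(2,3) is_lub_in_ideal_gen[OF assms(1,3)] assms(4)] by blast

lemma hatO_mono: assumes "I \<subseteq> J" "J \<in> Idl \<Omega>" shows "hatO \<Omega> I \<subseteq> hatO \<Omega> J"
  unfolding hatO_def using hat_ptsD(3) assms by blast

lemma hatO_vb_down_mono:
  assumes "viable_base X \<Omega>" "U \<subseteq> V" "V \<in> \<Omega>"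
  shows "hatO \<Omega> (vb_down \<Omega> U) \<subseteq> hatO \<Omega> (vb_down \<Omega> V)"
  by (rule hatO_mono) (use assms vb_down_in_Idl[OF assms(1)] in \<open>auto simp: vb_down_def\<close>)

lemma hatO_ideal_gen:
  assumes "viable_base X \<Omega>" "A \<subseteq> Idl \<Omega>"
  shows "hatO \<Omega> (ideal_gen \<Omega> A) = \<Union>(hatO \<Omega> ` A)"
proof
  show "hatO \<Omega> (ideal_gen \<Omega> A) \<subseteq> \<Union>(hatO \<Omega> ` A)"
  proof
    fix y assume "y \<in> hatO \<Omega> (ideal_gen \<Omega> A)"
    then have y: "y \<in> hat_pts \<Omega>" "ideal_gen \<Omega> A \<in> y" unfolding hatO_def by auto
    obtain a where "a \<in> A" "a \<in> y" using ideal_gen_in_hat_ptD[OF assms(1) y(1) assms(2) y(2)] by blast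
    then show "y \<in> \<Union>(hatO \<Omega> ` A)" using y(1) unfolding hatO_def by blast
  qed
  have "a \<subseteq> ideal_gen \<Omega> A" if "a \<in> A" for a
    using is_lub_in_ideal_gen[OF assms] that unfolding is_lub_in_def by blast
  then show "\<Union>(hatO \<Omega> ` A) \<subseteq> hatO \<Omega> (ideal_gen \<Omega> A)"
    using hatO_mono[OF _ ideal_gen_in_Idl[OF assms]] by blast
qed

lemma hatO_vb_down_empty: assumes "viable_base X \<Omega>" shows "hatO \<Omega> (vb_down \<Omega> {}) = {}"
proof -
  have "vb_down \<Omega> {} = ideal_gen \<Omega> {}" unfolding vb_down_def ideal_gen_def by auto
  then show ?thesis using hatO_ideal_gen[OF assms, of "{}"] by simp
qed

lemma hatO_vb_down_Un:
  assumes "viable_base X \<Omega>" "U \<in> \<Omega>" "V \<in> \<Omega>"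
  shows "hatO \<Omega> (vb_down \<Omega> (U \<union> V)) = hatO \<Omega> (vb_down \<Omega> U) \<union> hatO \<Omega> (vb_down \<Omega> V)"
proof -
  have "vb_down \<Omega> (U \<union> V) = ideal_gen \<Omega> {vb_down \<Omega> U, vb_down \<Omega> V}"
  proof
    show "vb_down \<Omega> (U \<union> V) \<subseteq> ideal_gen \<Omega> {vb_down \<Omega> U, vb_down \<Omega> V}"
    proof
      fix Z assume Z: "Z \<in> vb_down \<Omega> (U \<union> V)"
      then have "Z \<inter> U \<in> vb_down \<Omega> U" "Z \<inter> V \<in> vb_down \<Omega> V" "Z \<in> \<Omega>"
        unfolding vb_down_def using viable_baseD(4)[OF assms(1)] assms by auto
      moreover have "Z \<subseteq> \<Union>{Z \<inter> U, Z \<inter> V}" using Z unfolding vb_down_def by auto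
      ultimately show "Z \<in> ideal_gen \<Omega> {vb_down \<Omega> U, vb_down \<Omega> V}"
        unfolding ideal_gen_def by (intro CollectI conjI exI[of _ "{Z \<inter> U, Z \<inter> V}"]) auto
    qed
    show "ideal_gen \<Omega> {vb_down \<Omega> U, vb_down \<Omega> V} \<subseteq> vb_down \<Omega> (U \<union> V)"
    proof
      fix Z assume "Z \<in> ideal_gen \<Omega> {vb_down \<Omega> U, vb_down \<Omega> V}"
      then obtain F where F: "Z \<in> \<Omega>" "F \<subseteq> vb_down \<Omega> U \<union> vb_down \<Omega> V" "Z \<subseteq> \<Union>F"
        unfolding ideal_gen_def by auto
      have "\<Union>F \<subseteq> U \<union> V" using F(2) unfolding vb_down_def by blast
      then show "Z \<in> vb_down \<Omega> (U \<union> V)" using F(1,3) unfolding vb_down_def by blast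
    qed
  qed
  then show ?thesis
    using hatO_ideal_gen[OF assms(1), of "{vb_down \<Omega> U, vb_down \<Omega> V}"]
      vb_down_in_Idl[OF assms(1,2)] vb_down_in_Idl[OF assms(1,3)] by simp
qed

lemma hatO_vb_down_Int:
  assumes "viable_base X \<Omega>" "U \<in> \<Omega>" "V \<in> \<Omega>"
  shows "hatO \<Omega> (vb_down \<Omega> (U \<inter> V)) = hatO \<Omega> (vb_down \<Omega> U) \<inter> hatO \<Omega> (vb_down \<Omega> V)"
proof
  have "hatO \<Omega> (vb_down \<Omega> (U \<inter> V)) \<subseteq> hatO \<Omega> (vb_down \<Omega> U)"
    "hatO \<Omega> (vb_down \<Omega> (U \<inter> V)) \<subseteq> hatO \<Omega> (vb_down \<Omega> V)"
    by (rule hatO_vb_down_mono[OF assms(1)]; use assms in blast)+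
  then show "hatO \<Omega> (vb_down \<Omega> (U \<inter> V)) \<subseteq> hatO \<Omega> (vb_down \<Omega> U) \<inter> hatO \<Omega> (vb_down \<Omega> V)"
    by (rule Int_greatest)
  show "hatO \<Omega> (vb_down \<Omega> U) \<inter> hatO \<Omega> (vb_down \<Omega> V) \<subseteq> hatO \<Omega> (vb_down \<Omega> (U \<inter> V))"
  proof
    fix y assume "y \<in> hatO \<Omega> (vb_down \<Omega> U) \<inter> hatO \<Omega> (vb_down \<Omega> V)"
    then have y: "y \<in> hat_pts \<Omega>" "vb_down \<Omega> U \<in> y" "vb_down \<Omega> V \<in> y" unfolding hatO_def by auto
    have "vb_down \<Omega> (U \<inter> V) = vb_down \<Omega> U \<inter> vb_down \<Omega> V" unfolding vb_down_def by auto
    then show "y \<in> hatO \<Omega> (vb_down \<Omega> (U \<inter> V))"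
      using Int_in_hat_pt[OF assms(1) y] y(1) unfolding hatO_def by simp
  qed
qed

lemma hatO_vb_down_Union:
  assumes "viable_base X \<Omega>" "finite F" "F \<subseteq> \<Omega>"
  shows "hatO \<Omega> (vb_down \<Omega> (\<Union>F)) = (\<Union>V\<in>F. hatO \<Omega> (vb_down \<Omega> V))"
  using assms(2,3)
proof (induction F rule: finite_induct)
  case empty then show ?case using hatO_vb_down_empty[OF assms(1)] by simp
next
  case (insert x F)
  then have "x \<in> \<Omega>" "\<Union>F \<in> \<Omega>" using viable_base_Union[OF assms(1)] by auto
  then show ?case using insert hatO_vb_down_Un[OF assms(1)] by simp
qed

lemma hatO_vb_down_Inter:
  assumes "viable_base X \<Omega>" "finite K" "W ` K \<subseteq> \<Omega>"
  shows "hatO \<Omega> (vb_down \<Omega> (topspace X \<inter> \<Inter>(W ` K))) =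
    {y \<in> hat_pts \<Omega>. \<forall>j\<in>K. y \<in> hatO \<Omega> (vb_down \<Omega> (W j))}"
  using assms(2,3)
proof (induction K rule: finite_induct)
  case empty
  show ?case
    using Omega_in_hat_pt[OF assms(1)] by (auto simp: hatO_def vb_down_topspace[OF assms(1)])
next
  case (insert x F)
  have "topspace X \<inter> \<Inter>(W ` insert x F) = W x \<inter> (topspace X \<inter> \<Inter>(W ` F))" by auto
  moreover have "W x \<in> \<Omega>" "W ` F \<subseteq> \<Omega>" using insert(4) by auto
  ultimately have "hatO \<Omega> (vb_down \<Omega> (topspace X \<inter> \<Inter>(W ` insert x F))) =
      hatO \<Omega> (vb_down \<Omega> (W x)) \<inter> hatO \<Omega> (vb_down \<Omega> (topspace X \<inter> \<Inter>(W ` F)))"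
    using hatO_vb_down_Int[OF assms(1)] viable_base_Inter[OF assms(1) insert(1)] by simp
  also have "\<dots> = {y \<in> hat_pts \<Omega>. \<forall>j\<in>insert x F. y \<in> hatO \<Omega> (vb_down \<Omega> (W j))}"
    using insert(3) \<open>W ` F \<subseteq> \<Omega>\<close> by (auto simp: hatO_def)
  finally show ?case .
qed

section \<open>Prime filters of a viable base\<close>

definition prime_filter_on :: "'a set set \<Rightarrow> 'a set set \<Rightarrow> bool" where
  "prime_filter_on \<Omega> P \<longleftrightarrow> P \<subseteq> \<Omega> \<and> {} \<notin> P \<and> P \<noteq> {} \<and> (\<forall>U\<in>P. \<forall>V\<in>\<Omega>. U \<subseteq> V \<longrightarrow> V \<in> P) \<and>
     (\<forall>U\<in>P. \<forall>V\<in>P. U \<inter> V \<in> P) \<and> (\<forall>U\<in>\<Omega>. \<forall>V\<in>\<Omega>. U \<union> V \<in> P \<longrightarrow> U \<in> P \<or> V \<in> P)"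

lemma prime_filter_onI:
  assumes "P \<subseteq> \<Omega>" "{} \<notin> P" "P \<noteq> {}" "\<And>U V. U \<in> P \<Longrightarrow> V \<in> \<Omega> \<Longrightarrow> U \<subseteq> V \<Longrightarrow> V \<in> P"
    "\<And>U V. U \<in> P \<Longrightarrow> V \<in> P \<Longrightarrow> U \<inter> V \<in> P"
    "\<And>U V. U \<in> \<Omega> \<Longrightarrow> V \<in> \<Omega> \<Longrightarrow> U \<union> V \<in> P \<Longrightarrow> U \<in> P \<or> V \<in> P"
  shows "prime_filter_on \<Omega> P"
  unfolding prime_filter_on_def using assms by blast

lemma prime_filter_onD:
  assumes "prime_filter_on \<Omega> P"
  shows "P \<subseteq> \<Omega>" "{} \<notin> P" "P \<noteq> {}" "\<And>U V. U \<in> P \<Longrightarrow> V \<in> \<Omega> \<Longrightarrow> U \<subseteq> V \<Longrightarrow> V \<in> P"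
    "\<And>U V. U \<in> P \<Longrightarrow> V \<in> P \<Longrightarrow> U \<inter> V \<in> P"
    "\<And>U V. U \<in> \<Omega> \<Longrightarrow> V \<in> \<Omega> \<Longrightarrow> U \<union> V \<in> P \<Longrightarrow> U \<in> P \<or> V \<in> P"
  using assms unfolding prime_filter_on_def by auto


lemma prime_filter_on_Union:
  assumes "prime_filter_on \<Omega> P" "viable_base X \<Omega>" "finite F" "F \<subseteq> \<Omega>" "\<Union>F \<in> P"
  shows "\<exists>U\<in>F. U \<in> P"
  using assms(3-5)
proof (induction F rule: finite_induct)
  case empty then show ?case using prime_filter_onD(2)[OF assms(1)] by simp
next
  case (insert x F)
  then have "x \<in> \<Omega>" "\<Union>F \<in> \<Omega>" "x \<union> \<Union>F \<in> P" using viable_base_Union[OF assms(2)] by auto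
  then have "x \<in> P \<or> \<Union>F \<in> P" using prime_filter_onD(6)[OF assms(1)] by blast
  then show ?case using insert by blast
qed

lemma compl_prime_filterI:
  assumes "F \<subseteq> L" "F \<noteq> {}" "\<And>a b. a \<in> F \<Longrightarrow> b \<in> L \<Longrightarrow> a \<le> b \<Longrightarrow> b \<in> F"
    "\<And>a b m. a \<in> F \<Longrightarrow> b \<in> F \<Longrightarrow> is_glb_in L {a, b} m \<Longrightarrow> m \<in> F"
    "\<And>A s. A \<subseteq> L \<Longrightarrow> is_lub_in L A s \<Longrightarrow> s \<in> F \<Longrightarrow> A \<inter> F \<noteq> {}"
  shows "compl_prime_filter L F"
  unfolding compl_prime_filter_def
proof (intro conjI ballI impI allI)
  show "b \<in> F" if "a \<in> F" "b \<in> L" "a \<le> b" for a b using assms(3) that .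
  show "m \<in> F" if "a \<in> F" "b \<in> F" "is_glb_in L {a, b} m" for a b m using assms(4) that .
  show "A \<inter> F \<noteq> {}" if "A \<subseteq> L" "is_lub_in L A s" "s \<in> F" for A s using assms(5) that .
qed (use assms(1,2) in auto)

definition filter_point :: "'a set set \<Rightarrow> 'a set set \<Rightarrow> 'a set set set" where
  "filter_point \<Omega> P = {I \<in> Idl \<Omega>. I \<inter> P \<noteq> {}}"

lemma filter_point_in_hat_pts:
  assumes vb: "viable_base X \<Omega>" and P: "prime_filter_on \<Omega> P"
  shows "filter_point \<Omega> P \<in> hat_pts \<Omega>"
  unfolding hat_pts_def mem_Collect_eq
proof (rule compl_prime_filterI)
  note pf = prime_filter_onD[OF P]
  show "filter_point \<Omega> P \<subseteq> Idl \<Omega>" unfolding filter_point_def by blast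
  show "filter_point \<Omega> P \<noteq> {}"
    unfolding filter_point_def using Omega_in_Idl[OF vb] pf(1,3) by blast
  show "b \<in> filter_point \<Omega> P" if "a \<in> filter_point \<Omega> P" "b \<in> Idl \<Omega>" "a \<subseteq> b" for a b
    using that unfolding filter_point_def by blast
  show "m \<in> filter_point \<Omega> P"
    if ab: "a \<in> filter_point \<Omega> P" "b \<in> filter_point \<Omega> P" and m: "is_glb_in (Idl \<Omega>) {a, b} m" for a b m
  proof -
    obtain V1 V2 where V: "V1 \<in> a" "V1 \<in> P" "V2 \<in> b" "V2 \<in> P" and a: "a \<in> Idl \<Omega>" and b: "b \<in> Idl \<Omega>"
      using ab unfolding filter_point_def by blast
    have V12: "V1 \<inter> V2 \<in> \<Omega>" using V pf(1) viable_baseD(4)[OF vb] by blast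
    have "a \<inter> b \<subseteq> m" using m Idl_Int[OF vb a b] unfolding is_glb_in_def by blast
    moreover have "V1 \<inter> V2 \<in> a \<inter> b" using IdlD(3)[OF a V(1) V12] IdlD(3)[OF b V(3) V12] by blast
    moreover have "m \<in> Idl \<Omega>" using m unfolding is_glb_in_def by blast
    ultimately show ?thesis unfolding filter_point_def using pf(5)[OF V(2,4)] by blast
  qed
  show "A \<inter> filter_point \<Omega> P \<noteq> {}"
    if A: "A \<subseteq> Idl \<Omega>" "is_lub_in (Idl \<Omega>) A s" "s \<in> filter_point \<Omega> P" for A s
  proof -
    obtain V where V: "V \<in> s" "V \<in> P" using A(3) unfolding filter_point_def by blast
    have "s \<le> ideal_gen \<Omega> A"
      using is_lub_inD(3)[OF A(2) ideal_gen_in_Idl[OF vb A(1)]] is_lub_inD(2)[OF is_lub_in_ideal_gen[OF vb A(1)]]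
      by blast
    then have "V \<in> ideal_gen \<Omega> A" using V(1) by (rule subsetD)
    then obtain F where F: "finite F" "F \<subseteq> \<Union>A" "V \<subseteq> \<Union>F"
      unfolding ideal_gen_def by blast
    have FO: "F \<subseteq> \<Omega>" using F(2) A(1) IdlD(1) by blast
    then have "\<Union>F \<in> P" using pf(4)[OF V(2) viable_base_Union[OF vb F(1)] F(3)] by blast
    then obtain U where "U \<in> F" "U \<in> P" using prime_filter_on_Union[OF P vb F(1) FO] by blast
    then obtain a where "a \<in> A" "U \<in> a" "U \<in> P" using F(2) by blast
    then have "a \<in> A \<inter> filter_point \<Omega> P" using A(1) unfolding filter_point_def by blast
    then show ?thesis by blast
  qed
qed

lemma filter_point_in_hatO_vb_down_iff:
  assumes "viable_base X \<Omega>" "prime_filter_on \<Omega> P" "U \<in> \<Omega>"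
  shows "filter_point \<Omega> P \<in> hatO \<Omega> (vb_down \<Omega> U) \<longleftrightarrow> U \<in> P"
proof
  assume "filter_point \<Omega> P \<in> hatO \<Omega> (vb_down \<Omega> U)"
  then obtain V where "V \<in> P" "V \<subseteq> U"
    unfolding hatO_def filter_point_def vb_down_def by blast
  then show "U \<in> P" using prime_filter_onD(4)[OF assms(2)] assms(3) by blast
next
  assume "U \<in> P"
  then have "vb_down \<Omega> U \<inter> P \<noteq> {}" using assms(3) unfolding vb_down_def by blast
  then show "filter_point \<Omega> P \<in> hatO \<Omega> (vb_down \<Omega> U)"
    using filter_point_in_hat_pts[OF assms(1,2)] vb_down_in_Idl[OF assms(1,3)]
    unfolding hatO_def filter_point_def by blast
qed

lemma prime_filter_on_nhds:
  assumes "viable_base X \<Omega>" "x \<in> W" "W \<in> \<Omega>"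
  shows "prime_filter_on \<Omega> {V \<in> \<Omega>. x \<in> V}"
  by (rule prime_filter_onI) (use assms viable_baseD[OF assms(1)] in auto)

text \<open>Neighbourhood filters of points of \<open>X\<close> separate the opens \<open>O_{\<down>W}\<close>.\<close>
lemma hatO_vb_down_subsetD:
  assumes "viable_base X \<Omega>" "W \<in> \<Omega>" "U \<in> \<Omega>"
    and "hatO \<Omega> (vb_down \<Omega> W) \<subseteq> hatO \<Omega> (vb_down \<Omega> U)"
  shows "W \<subseteq> U"
proof
  fix x assume x: "x \<in> W"
  note P = prime_filter_on_nhds[OF assms(1) x assms(2)]
  have "filter_point \<Omega> {V \<in> \<Omega>. x \<in> V} \<in> hatO \<Omega> (vb_down \<Omega> W)"
    using filter_point_in_hatO_vb_down_iff[OF assms(1) P assms(2)] x assms(2) by blast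
  then show "x \<in> U"
    using assms(4) filter_point_in_hatO_vb_down_iff[OF assms(1) P assms(3)] by blast
qed


definition avoiding_filter :: "'a set set \<Rightarrow> 'a set set \<Rightarrow> 'a set \<Rightarrow> 'a set set \<Rightarrow> bool" where
  "avoiding_filter \<Omega> K W F \<longleftrightarrow> F \<subseteq> \<Omega> \<and> W \<in> F \<and> F \<inter> K = {} \<and>
     (\<forall>U\<in>F. \<forall>V\<in>\<Omega>. U \<subseteq> V \<longrightarrow> V \<in> F) \<and> (\<forall>U\<in>F. \<forall>V\<in>F. U \<inter> V \<in> F)"

lemma avoiding_filterI:
  assumes "F \<subseteq> \<Omega>" "W \<in> F" "F \<inter> K = {}" "\<And>U V. U \<in> F \<Longrightarrow> V \<in> \<Omega> \<Longrightarrow> U \<subseteq> V \<Longrightarrow> V \<in> F"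
    "\<And>U V. U \<in> F \<Longrightarrow> V \<in> F \<Longrightarrow> U \<inter> V \<in> F"
  shows "avoiding_filter \<Omega> K W F"
  unfolding avoiding_filter_def using assms by blast

lemma avoiding_filterD:
  assumes "avoiding_filter \<Omega> K W F"
  shows "F \<subseteq> \<Omega>" "W \<in> F" "F \<inter> K = {}" "\<And>U V. U \<in> F \<Longrightarrow> V \<in> \<Omega> \<Longrightarrow> U \<subseteq> V \<Longrightarrow> V \<in> F"
    "\<And>U V. U \<in> F \<Longrightarrow> V \<in> F \<Longrightarrow> U \<inter> V \<in> F"
  using assms unfolding avoiding_filter_def by auto

lemma avoiding_filter_chain_Union:
  assumes "C \<noteq> {}" "subset.chain {F. avoiding_filter \<Omega> K W F} C"
  shows "avoiding_filter \<Omega> K W (\<Union>C)"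
proof -
  have F: "avoiding_filter \<Omega> K W F" if "F \<in> C" for F
    using assms(2) that unfolding subset_chain_def by blast
  have comparable: "F \<subseteq> G \<or> G \<subseteq> F" if "F \<in> C" "G \<in> C" for F G
    using assms(2) that unfolding subset_chain_def by blast
  show ?thesis
  proof (rule avoiding_filterI)
    show "\<Union>C \<subseteq> \<Omega>" "\<Union>C \<inter> K = {}" using avoiding_filterD(1,3)[OF F] by blast+
    show "W \<in> \<Union>C" using avoiding_filterD(2)[OF F] assms(1) by blast
    show "V \<in> \<Union>C" if "U \<in> \<Union>C" "V \<in> \<Omega>" "U \<subseteq> V" for U V
      using that avoiding_filterD(4)[OF F] by blast
    show "U \<inter> V \<in> \<Union>C" if UV: "U \<in> \<Union>C" "V \<in> \<Union>C" for U V
    proof -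
      obtain F G where "F \<in> C" "G \<in> C" "U \<in> F" "V \<in> G" using UV by blast
      then show ?thesis using comparable avoiding_filterD(5)[OF F] by blast
    qed
  qed
qed

text \<open>If \<open>U \<notin> M\<close>, the filter generated by \<open>M\<close> and \<open>U\<close> is a strictly larger candidate; by
  maximality it must meet \<open>K\<close>.\<close>
lemma maximal_avoiding_filter_extend:
  assumes vb: "viable_base X \<Omega>" and K: "K \<in> Idl \<Omega>" and W: "W \<in> \<Omega>"
    and M: "avoiding_filter \<Omega> K W M"
    and max: "\<And>F. avoiding_filter \<Omega> K W F \<Longrightarrow> M \<subseteq> F \<Longrightarrow> F = M"
    and U: "U \<in> \<Omega>" "U \<notin> M"
  shows "\<exists>m\<in>M. m \<inter> U \<in> K"
proof (rule ccontr)
  assume avoid: "\<not> (\<exists>m\<in>M. m \<inter> U \<in> K)"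
  note mD = avoiding_filterD[OF M]
  define MU where "MU = {Z \<in> \<Omega>. \<exists>m\<in>M. m \<inter> U \<subseteq> Z}"
  have "avoiding_filter \<Omega> K W MU"
  proof (rule avoiding_filterI)
    show "MU \<subseteq> \<Omega>" "W \<in> MU" unfolding MU_def using W mD(2) by blast+
    show "MU \<inter> K = {}"
    proof (rule ccontr)
      assume "MU \<inter> K \<noteq> {}"
      then obtain Z m where Z: "Z \<in> K" "m \<in> M" "m \<inter> U \<subseteq> Z" unfolding MU_def by blast
      have "m \<inter> U \<in> \<Omega>" using mD(1) Z(2) viable_baseD(4)[OF vb _ U(1)] by blast
      then show False using IdlD(3)[OF K Z(1) _ Z(3)] avoid Z(2) by blast
    qed
    show "V \<in> MU" if "A \<in> MU" "V \<in> \<Omega>" "A \<subseteq> V" for A V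
      using that unfolding MU_def by blast
    show "A \<inter> B \<in> MU" if AB: "A \<in> MU" "B \<in> MU" for A B
    proof -
      obtain m1 m2 where "m1 \<in> M" "m1 \<inter> U \<subseteq> A" "m2 \<in> M" "m2 \<inter> U \<subseteq> B" "A \<in> \<Omega>" "B \<in> \<Omega>"
        using AB unfolding MU_def by blast
      then show ?thesis
        unfolding MU_def using mD(5) viable_baseD(4)[OF vb] by (intro CollectI conjI bexI[of _ "m1 \<inter> m2"]) auto
    qed
  qed
  moreover have "M \<subseteq> MU" unfolding MU_def using mD(1) by blast
  moreover have "U \<in> MU" unfolding MU_def using U(1) mD(2) by blast
  ultimately show False using max U(2) by blast
qed

lemma maximal_avoiding_filter_prime:
  assumes vb: "viable_base X \<Omega>" and K: "K \<in> Idl \<Omega>" and W: "W \<in> \<Omega>"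
    and M: "avoiding_filter \<Omega> K W M"
    and max: "\<And>F. avoiding_filter \<Omega> K W F \<Longrightarrow> M \<subseteq> F \<Longrightarrow> F = M"
  shows "prime_filter_on \<Omega> M"
proof (rule prime_filter_onI)
  note mD = avoiding_filterD[OF M]
  show "M \<subseteq> \<Omega>" "M \<noteq> {}" using mD(1,2) by blast+
  show "{} \<notin> M" using mD(3) empty_in_Idl[OF K viable_baseD(1)[OF vb]] by blast
  show "V \<in> M" if "U \<in> M" "V \<in> \<Omega>" "U \<subseteq> V" for U V using mD(4) that .
  show "U \<inter> V \<in> M" if "U \<in> M" "V \<in> M" for U V using mD(5) that .
  show "U \<in> M \<or> V \<in> M" if UV: "U \<in> \<Omega>" "V \<in> \<Omega>" "U \<union> V \<in> M" for U V
  proof (rule ccontr)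
    assume "\<not> (U \<in> M \<or> V \<in> M)"
    then obtain m1 m2 where m: "m1 \<in> M" "m1 \<inter> U \<in> K" "m2 \<in> M" "m2 \<inter> V \<in> K"
      using maximal_avoiding_filter_extend[OF vb K W M max] UV(1,2) by metis
    have mm: "m1 \<inter> m2 \<inter> (U \<union> V) \<in> M" using mD(5)[OF mD(5)[OF m(1,3)] UV(3)] .
    have "(m1 \<inter> U) \<union> (m2 \<inter> V) \<in> K" using Un_in_Idl[OF vb K m(2,4)] .
    moreover have "m1 \<inter> m2 \<inter> (U \<union> V) \<subseteq> (m1 \<inter> U) \<union> (m2 \<inter> V)" by blast
    ultimately have "m1 \<inter> m2 \<inter> (U \<union> V) \<in> K" using IdlD(3)[OF K] mm mD(1) by blast
    then show False using mm mD(3) by blast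
  qed
qed

lemma prime_filter_separation:
  assumes vb: "viable_base X \<Omega>" and W: "W \<in> \<Omega>" and K: "K \<in> Idl \<Omega>" and "W \<notin> K"
  obtains P where "prime_filter_on \<Omega> P" "W \<in> P" "P \<inter> K = {}"
proof -
  have "avoiding_filter \<Omega> K W {V \<in> \<Omega>. W \<subseteq> V}"
  proof (rule avoiding_filterI)
    show "{V \<in> \<Omega>. W \<subseteq> V} \<inter> K = {}" using IdlD(3)[OF K _ W] \<open>W \<notin> K\<close> by blast
  qed (use W viable_baseD(4)[OF vb] in auto)
  then obtain M where M: "avoiding_filter \<Omega> K W M"
    and max: "\<And>F. avoiding_filter \<Omega> K W F \<Longrightarrow> M \<subseteq> F \<Longrightarrow> F = M"
    using subset_Zorn_nonempty[of "{F. avoiding_filter \<Omega> K W F}"] avoiding_filter_chain_Union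
    by (metis (no_types, lifting) empty_iff mem_Collect_eq)
  show ?thesis
    using that maximal_avoiding_filter_prime[OF vb K W M max] avoiding_filterD(2,3)[OF M] by blast
qed


section \<open>The way-below relation\<close>

lemma vb_lub_eqI: "is_lub_in UNIV A s \<Longrightarrow> vb_lub A = s"
  unfolding vb_lub_def by (rule the_equality) (auto intro: is_lub_in_unique)

lemma is_lub_in_empty: "is_lub_in UNIV {} (bot::'d::order_bot)"
  unfolding is_lub_in_def by simp

lemma vb_directedD:
  assumes "vb_directed S"
  shows "S \<noteq> {}" "\<And>x y. x \<in> S \<Longrightarrow> y \<in> S \<Longrightarrow> \<exists>z\<in>S. x \<le> z \<and> y \<le> z"
  using assms unfolding vb_directed_def by auto

lemma directed_finite_upper_bound:
  assumes "vb_directed (S::'d::order set)" "finite F" "F \<subseteq> S"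
  shows "\<exists>d\<in>S. \<forall>e\<in>F. e \<le> d"
  using assms(2,3)
proof (induction F rule: finite_induct)
  case empty then show ?case using assms(1) unfolding vb_directed_def by blast
next
  case (insert x F)
  then obtain d where d: "d \<in> S" "\<forall>e\<in>F. e \<le> d" by blast
  obtain z where "z \<in> S" "x \<le> z" "d \<le> z"
    using assms(1) d(1) insert(4) unfolding vb_directed_def by blast
  then show ?case using d(2) by (auto intro: order.trans)
qed

lemma way_below_inD:
  assumes "way_below_in P x y" "S \<subseteq> P" "vb_directed S" "is_lub_in P S s" "y \<le> s"
  shows "\<exists>d\<in>S. x \<le> d"
  using assms unfolding way_below_in_def by blast

lemma way_below_imp_le: assumes "way_below_in UNIV (a::'d::order) b" shows "a \<le> b"
proof -
  have "vb_directed {b}" "is_lub_in UNIV {b} b" unfolding vb_directed_def is_lub_in_def by blast+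
  then show ?thesis using way_below_inD[OF assms _ _ _ order.refl] by blast
qed

lemma way_below_mono:
  assumes "a' \<le> a" "way_below_in UNIV (a::'d::order) b" "b \<le> b'"
  shows "way_below_in UNIV a' b'"
  unfolding way_below_in_def
proof (intro conjI allI impI)
  fix S s assume S: "S \<subseteq> UNIV" "vb_directed S" "is_lub_in UNIV S s" "b' \<le> s"
  then obtain d where "d \<in> S" "a \<le> d"
    using way_below_inD[OF assms(2) S(1-3)] assms(3) by (meson order.trans)
  then show "\<exists>d\<in>S. a' \<le> d" using assms(1) by (meson order.trans)
qed auto

lemma way_below_finite_lub:
  assumes "finite A" "\<And>a. a \<in> A \<Longrightarrow> way_below_in UNIV a (x::'d::order)" "is_lub_in UNIV A l"
  shows "way_below_in UNIV l x"
  unfolding way_below_in_def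
proof (intro conjI allI impI)
  fix S s assume S: "S \<subseteq> UNIV" "vb_directed S" "is_lub_in UNIV S s" "x \<le> s"
  obtain f where f: "\<And>a. a \<in> A \<Longrightarrow> f a \<in> S \<and> a \<le> f a"
    using way_below_inD[OF assms(2) S] by metis
  obtain d where d: "d \<in> S" "\<forall>e\<in>f ` A. e \<le> d"
    using directed_finite_upper_bound[OF S(2), of "f ` A"] assms(1) f by blast
  have "l \<le> d" using is_lub_inD(3)[OF assms(3)] f d(2) by (meson UNIV_I image_eqI order.trans)
  then show "\<exists>d\<in>S. l \<le> d" using d(1) by blast
qed auto

lemma bc_domainD:
  assumes "bc_domain_with_basis (D0::'d::order_bot set)"
  shows "\<And>S::'d set. vb_directed S \<Longrightarrow> \<exists>s. is_lub_in UNIV S s"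
    "\<And>x. vb_directed {b \<in> D0. way_below_in UNIV b x}"
    "\<And>x. is_lub_in UNIV {b \<in> D0. way_below_in UNIV b x} x"
    "\<And>(A::'d set) u. (\<And>a. a \<in> A \<Longrightarrow> a \<le> u) \<Longrightarrow> \<exists>s. is_lub_in UNIV A s"
proof -
  show "\<And>S::'d set. vb_directed S \<Longrightarrow> \<exists>s. is_lub_in UNIV S s"
    "\<And>x. vb_directed {b \<in> D0. way_below_in UNIV b x}"
    "\<And>x. is_lub_in UNIV {b \<in> D0. way_below_in UNIV b x} x"
    using assms unfolding bc_domain_with_basis_def by auto
  fix A :: "'d set" and u assume "\<And>a. a \<in> A \<Longrightarrow> a \<le> u"
  then have "\<exists>u. \<forall>a\<in>A. a \<le> u" by blast
  then show "\<exists>s. is_lub_in UNIV A s" using assms unfolding bc_domain_with_basis_def by blast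
qed

text \<open>Interpolation: the directed set of basis elements way below some basis element way below
  \<open>x\<close> has join \<open>x\<close>.\<close>
lemma way_below_interpolate:
  assumes bc: "bc_domain_with_basis (D0::'d::order_bot set)" and ax: "way_below_in UNIV a (x::'d)"
  shows "\<exists>c. way_below_in UNIV a c \<and> way_below_in UNIV c x"
proof -
  define Ap where "Ap y = {b \<in> D0. way_below_in UNIV b y}" for y
  have Ap: "vb_directed (Ap y)" "is_lub_in UNIV (Ap y) y" for y
    unfolding Ap_def using bc_domainD(2,3)[OF bc] by blast+
  define S where "S = (\<Union>d\<in>Ap x. Ap d)"
  have dir: "vb_directed S" unfolding vb_directed_def
  proof (intro conjI ballI)
    obtain d c where "d \<in> Ap x" "c \<in> Ap d" using Ap(1) unfolding vb_directed_def by blast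
    then show "S \<noteq> {}" unfolding S_def by blast
  next
    fix c1 c2 assume "c1 \<in> S" "c2 \<in> S"
    then obtain d1 d2 where d: "d1 \<in> Ap x" "c1 \<in> Ap d1" "d2 \<in> Ap x" "c2 \<in> Ap d2"
      unfolding S_def by blast
    obtain d3 where d3: "d3 \<in> Ap x" "d1 \<le> d3" "d2 \<le> d3"
      using Ap(1)[of x] d(1,3) unfolding vb_directed_def by blast
    have "way_below_in UNIV c1 d3" "way_below_in UNIV c2 d3"
      using way_below_mono[OF order.refl _ d3(2)] way_below_mono[OF order.refl _ d3(3)] d(2,4)
      unfolding Ap_def by blast+
    then obtain e1 e2 where e: "e1 \<in> Ap d3" "c1 \<le> e1" "e2 \<in> Ap d3" "c2 \<le> e2"
      using way_below_inD[OF _ _ Ap(1) Ap(2) order.refl] by (metis subset_UNIV)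
    obtain e3 where "e3 \<in> Ap d3" "e1 \<le> e3" "e2 \<le> e3"
      using Ap(1)[of d3] e(1,3) unfolding vb_directed_def by blast
    then show "\<exists>z\<in>S. c1 \<le> z \<and> c2 \<le> z"
      unfolding S_def using d3(1) e(2,4) by (meson UN_I order.trans)
  qed
  obtain s where s: "is_lub_in UNIV S s" using bc_domainD(1)[OF bc dir] by blast
  have "d \<le> s" if "d \<in> Ap x" for d
    using is_lub_inD(3)[OF Ap(2)[of d], of s] is_lub_inD(2)[OF s] that unfolding S_def by blast
  then have "x \<le> s" using is_lub_inD(3)[OF Ap(2)[of x], of s] by blast
  then obtain c where c: "c \<in> S" "a \<le> c" using way_below_inD[OF ax _ dir s] by blast
  then obtain d where "d \<in> Ap x" "c \<in> Ap d" unfolding S_def by blast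
  then show ?thesis using way_below_mono[OF c(2) _ order.refl] unfolding Ap_def by blast
qed

lemma way_below_directed_lub:
  assumes bc: "bc_domain_with_basis (D0::'d::order_bot set)"
    and T: "vb_directed T" "is_lub_in UNIV T t" and b: "way_below_in UNIV b (t::'d)"
  shows "\<exists>x\<in>T. way_below_in UNIV b x"
proof -
  obtain c where c: "way_below_in UNIV b c" "way_below_in UNIV c t"
    using way_below_interpolate[OF bc b] by blast
  obtain x where "x \<in> T" "c \<le> x" using way_below_inD[OF c(2) _ T order.refl] by blast
  then show ?thesis using way_below_mono[OF order.refl c(1)] by blast
qed

lemma scott_open_way_above:
  assumes bc: "bc_domain_with_basis (D0::'d::order_bot set)"
  shows "scott_open {d. way_below_in UNIV (b::'d) d}"
  unfolding scott_open_def
  using way_below_mono[OF order.refl] way_below_directed_lub[OF bc] by blast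


section \<open>Step functions\<close>

definition active_indices :: "'a set set \<Rightarrow> 'i set \<Rightarrow> ('i \<Rightarrow> 'a set) \<Rightarrow> 'a set set set \<Rightarrow> 'i set" where
  "active_indices \<Omega> I W y = {i \<in> I. y \<in> hatO \<Omega> (vb_down \<Omega> (W i))}"

lemma step_join_eq: "step_join \<Omega> I W b y = vb_lub (b ` active_indices \<Omega> I W y)"
  unfolding step_join_def active_indices_def by (simp add: setcompr_eq_image)

lemma consistent_family_is_lub:
  assumes bc: "bc_domain_with_basis (D0::'d::order_bot set)"
    and cons: "consistent_family \<Omega> I W (b::'i \<Rightarrow> 'd)"
    and K: "K \<subseteq> I" "\<And>i. i \<in> K \<Longrightarrow> y \<in> hatO \<Omega> (vb_down \<Omega> (W i))"
  shows "is_lub_in UNIV (b ` K) (vb_lub (b ` K))"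
proof -
  have "(\<Inter>i\<in>K. hatO \<Omega> (vb_down \<Omega> (W i))) \<noteq> {}" using K(2) by blast
  then obtain u where "\<forall>i\<in>K. b i \<le> u" using cons K(1) unfolding consistent_family_def by blast
  then obtain s where "is_lub_in UNIV (b ` K) s" using bc_domainD(4)[OF bc, of "b ` K" u] by blast
  then show ?thesis using vb_lub_eqI by metis
qed

lemma step_join_is_lub:
  assumes "bc_domain_with_basis (D0::'d::order_bot set)" "consistent_family \<Omega> I W (b::'i \<Rightarrow> 'd)"
  shows "is_lub_in UNIV (b ` active_indices \<Omega> I W y) (step_join \<Omega> I W b y)"
  unfolding step_join_eq by (rule consistent_family_is_lub[OF assms]) (auto simp: active_indices_def)

lemma step_join_ge:
  assumes "bc_domain_with_basis (D0::'d::order_bot set)" "consistent_family \<Omega> I W (b::'i \<Rightarrow> 'd)"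
    and "i \<in> I" "y \<in> hatO \<Omega> (vb_down \<Omega> (W i))"
  shows "b i \<le> step_join \<Omega> I W b y"
  using is_lub_inD(2)[OF step_join_is_lub[OF assms(1,2)]] assms(3,4)
  unfolding active_indices_def by blast

lemma step_join_le:
  assumes "bc_domain_with_basis (D0::'d::order_bot set)" "consistent_family \<Omega> I W (b::'i \<Rightarrow> 'd)"
    and "\<And>i. i \<in> I \<Longrightarrow> y \<in> hatO \<Omega> (vb_down \<Omega> (W i)) \<Longrightarrow> b i \<le> u"
  shows "step_join \<Omega> I W b y \<le> u"
  using is_lub_inD(3)[OF step_join_is_lub[OF assms(1,2)]] assms(3)
  unfolding active_indices_def by blast

lemma step_join_le_fun:
  assumes "bc_domain_with_basis (D0::'d::order_bot set)" "consistent_family \<Omega> I W (b::'i \<Rightarrow> 'd)"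
    and "\<And>i y. i \<in> I \<Longrightarrow> y \<in> hatO \<Omega> (vb_down \<Omega> (W i)) \<Longrightarrow> b i \<le> h y"
  shows "step_join \<Omega> I W b \<le> h"
  using step_join_le[OF assms(1,2)] assms(3) by (simp add: le_fun_def)

lemma step_join_outside:
  assumes "y \<notin> hat_pts \<Omega>" shows "step_join \<Omega> I W (b::'i \<Rightarrow> 'd::order_bot) y = bot"
proof -
  have "active_indices \<Omega> I W y = {}" using assms unfolding active_indices_def hatO_def by blast
  then show ?thesis unfolding step_join_eq using vb_lub_eqI[OF is_lub_in_empty] by simp
qed

lemma consistent_family_mono:
  assumes "consistent_family \<Omega> I W b" "\<forall>i\<in>I. c i \<le> b i"
  shows "consistent_family \<Omega> I W (c::'i \<Rightarrow> 'd::order_bot)"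
  unfolding consistent_family_def
proof (intro allI impI)
  fix K assume K: "K \<subseteq> I" "(\<Inter>i\<in>K. hatO \<Omega> (vb_down \<Omega> (W i))) \<noteq> {}"
  then obtain u where "\<forall>i\<in>K. b i \<le> u" using assms(1) unfolding consistent_family_def by blast
  then have "\<forall>i\<in>K. c i \<le> u" using assms(2) K(1) by (meson order.trans subsetD)
  then show "\<exists>u. \<forall>i\<in>K. c i \<le> u" by blast
qed

lemma step_join_mono:
  assumes bc: "bc_domain_with_basis (D0::'d::order_bot set)"
    and "consistent_family \<Omega> I W (c::'i \<Rightarrow> 'd)" "consistent_family \<Omega> I W c'"
    and "\<forall>i\<in>I. c i \<le> c' i"
  shows "step_join \<Omega> I W c \<le> step_join \<Omega> I W c'"
  using step_join_le_fun[OF bc assms(2)] step_join_ge[OF bc assms(3)] assms(4) by (meson order.trans)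

lemma step_join_preimage_eq:
  assumes bc: "bc_domain_with_basis (D0::'d::order_bot set)"
    and cons: "consistent_family \<Omega> I W (b::'i \<Rightarrow> 'd)"
    and up: "\<forall>x\<in>V. \<forall>z. x \<le> z \<longrightarrow> z \<in> V"
  shows "{y \<in> hat_pts \<Omega>. step_join \<Omega> I W b y \<in> V} =
    (\<Union>K\<in>{K. K \<subseteq> I \<and> vb_lub (b ` K) \<in> V}. {y \<in> hat_pts \<Omega>. \<forall>j\<in>K. y \<in> hatO \<Omega> (vb_down \<Omega> (W j))})"
    (is "?L = ?R")
proof
  show "?L \<subseteq> ?R"
  proof
    fix y assume "y \<in> ?L"
    then have "active_indices \<Omega> I W y \<in> {K. K \<subseteq> I \<and> vb_lub (b ` K) \<in> V}" "y \<in> hat_pts \<Omega>"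
      unfolding step_join_eq active_indices_def by auto
    then show "y \<in> ?R" unfolding active_indices_def by blast
  qed
  show "?R \<subseteq> ?L"
  proof
    fix y assume "y \<in> ?R"
    then obtain K where K: "K \<subseteq> I" "vb_lub (b ` K) \<in> V" "y \<in> hat_pts \<Omega>"
      "\<And>j. j \<in> K \<Longrightarrow> y \<in> hatO \<Omega> (vb_down \<Omega> (W j))" by blast
    have "vb_lub (b ` K) \<le> step_join \<Omega> I W b y"
      using is_lub_inD(3)[OF consistent_family_is_lub[OF bc cons K(1,4)]] step_join_ge[OF bc cons] K(1,4)
      by blast
    then show "y \<in> ?L" using up K(2,3) by blast
  qed
qed

lemma step_join_preimage_upset:
  assumes vb: "viable_base X \<Omega>" and bc: "bc_domain_with_basis (D0::'d::order_bot set)"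
    and fin: "finite I" and WI: "\<forall>i\<in>I. W i \<in> \<Omega>" and cons: "consistent_family \<Omega> I W (b::'i \<Rightarrow> 'd)"
    and up: "\<forall>x\<in>V. \<forall>z. x \<le> z \<longrightarrow> z \<in> V"
  shows "\<exists>U\<in>\<Omega>. {y \<in> hat_pts \<Omega>. step_join \<Omega> I W b y \<in> V} = hatO \<Omega> (vb_down \<Omega> U)"
proof -
  define Good where "Good = {K. K \<subseteq> I \<and> vb_lub (b ` K) \<in> V}"
  define Opens where "Opens = (\<lambda>K. topspace X \<inter> \<Inter>(W ` K)) ` Good"
  have K: "finite K" "W ` K \<subseteq> \<Omega>" if "K \<in> Good" for K
    using that fin WI finite_subset unfolding Good_def by auto
  have fin_Opens: "finite Opens" "Opens \<subseteq> \<Omega>"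
    unfolding Opens_def Good_def using fin viable_base_Inter[OF vb K] by (auto simp: Good_def)
  have "hatO \<Omega> (vb_down \<Omega> (\<Union>Opens)) = (\<Union>U\<in>Opens. hatO \<Omega> (vb_down \<Omega> U))"
    by (rule hatO_vb_down_Union[OF vb fin_Opens])
  also have "\<dots> = (\<Union>K\<in>Good. hatO \<Omega> (vb_down \<Omega> (topspace X \<inter> \<Inter>(W ` K))))"
    unfolding Opens_def by (simp only: image_image)
  also have "\<dots> = (\<Union>K\<in>Good. {y \<in> hat_pts \<Omega>. \<forall>j\<in>K. y \<in> hatO \<Omega> (vb_down \<Omega> (W j))})"
    using hatO_vb_down_Inter[OF vb K] by simp
  also have "\<dots> = {y \<in> hat_pts \<Omega>. step_join \<Omega> I W b y \<in> V}"
    unfolding Good_def by (rule step_join_preimage_eq[OF bc cons up, symmetric])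
  finally show ?thesis using viable_base_Union[OF vb fin_Opens] by metis
qed

lemma step_join_in_fun_space:
  assumes vb: "viable_base X \<Omega>" and bc: "bc_domain_with_basis (D0::'d::order_bot set)"
    and "finite I" "\<forall>i\<in>I. W i \<in> \<Omega>" "consistent_family \<Omega> I W (b::'i \<Rightarrow> 'd)"
  shows "step_join \<Omega> I W b \<in> fun_space \<Omega>"
  unfolding fun_space_def mem_Collect_eq hat_cont_def
proof (intro conjI allI impI)
  fix V :: "'d set" assume "scott_open V"
  then have "\<forall>x\<in>V. \<forall>z. x \<le> z \<longrightarrow> z \<in> V" unfolding scott_open_def by blast
  from step_join_preimage_upset[OF assms this] obtain U
    where "U \<in> \<Omega>" "{y \<in> hat_pts \<Omega>. step_join \<Omega> I W b y \<in> V} = hatO \<Omega> (vb_down \<Omega> U)"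
    by blast
  then show "\<exists>J\<in>Idl \<Omega>. {y \<in> hat_pts \<Omega>. step_join \<Omega> I W b y \<in> V} = hatO \<Omega> J"
    using vb_down_in_Idl[OF vb] by blast
qed (rule step_join_outside)

section \<open>Directed joins in the function space\<close>

lemma vb_directed_image_eval:
  assumes "vb_directed (S :: ('x \<Rightarrow> 'd::order) set)"
  shows "vb_directed ((\<lambda>h. h y) ` S)"
  unfolding vb_directed_def
proof (intro conjI ballI)
  show "(\<lambda>h. h y) ` S \<noteq> {}" using assms unfolding vb_directed_def by blast
  fix a b assume "a \<in> (\<lambda>h. h y) ` S" "b \<in> (\<lambda>h. h y) ` S"
  then obtain h1 h2 where h: "h1 \<in> S" "h2 \<in> S" "a = h1 y" "b = h2 y" by blast
  then obtain h3 where "h3 \<in> S" "h1 \<le> h3" "h2 \<le> h3" using assms unfolding vb_directed_def by blast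
  then show "\<exists>z\<in>(\<lambda>h. h y) ` S. a \<le> z \<and> b \<le> z" using h by (auto dest: le_funD)
qed

text \<open>The preimage of a Scott-open set under the pointwise join is the union of the preimages
  under the members of \<open>S\<close>, i.e. an open \<open>O_I\<close> with \<open>I\<close> the join of their ideals.\<close>
lemma pointwise_lub_in_fun_space:
  assumes vb: "viable_base X \<Omega>" and S: "S \<subseteq> fun_space \<Omega>" "vb_directed (S :: ('a set set set \<Rightarrow> 'd::order_bot) set)"
    and p: "\<And>y. is_lub_in UNIV ((\<lambda>h. h y) ` S) (p y)"
  shows "p \<in> fun_space \<Omega>"
  unfolding fun_space_def mem_Collect_eq
proof (intro conjI allI impI)
  fix y assume y: "y \<notin> hat_pts \<Omega>"
  have "h y = bot" if "h \<in> S" for h using S(1) that y unfolding fun_space_def by blast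
  moreover obtain h0 where "h0 \<in> S" using S(2) unfolding vb_directed_def by blast
  ultimately have "(\<lambda>h. h y) ` S = {bot}" by (metis (mono_tags, lifting) empty_iff image_constant image_cong)
  moreover have "is_lub_in UNIV {bot} (bot::'d)" unfolding is_lub_in_def by simp
  ultimately show "p y = bot" using is_lub_in_unique[OF p] by metis
next
  show "hat_cont \<Omega> p" unfolding hat_cont_def
  proof (intro allI impI)
    fix V :: "'d set" assume V: "scott_open V"
    have up: "\<forall>x\<in>V. \<forall>z. x \<le> z \<longrightarrow> z \<in> V" using V unfolding scott_open_def by blast
    have "\<forall>h\<in>S. \<exists>J\<in>Idl \<Omega>. {y \<in> hat_pts \<Omega>. h y \<in> V} = hatO \<Omega> J"
      using S(1) V unfolding fun_space_def hat_cont_def by blast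
    then obtain J where J: "\<And>h. h \<in> S \<Longrightarrow> J h \<in> Idl \<Omega> \<and> {y \<in> hat_pts \<Omega>. h y \<in> V} = hatO \<Omega> (J h)"
      by metis
    then have JS: "J ` S \<subseteq> Idl \<Omega>" by blast
    have "{y \<in> hat_pts \<Omega>. p y \<in> V} = (\<Union>h\<in>S. {y \<in> hat_pts \<Omega>. h y \<in> V})"
    proof (intro equalityI subsetI)
      fix y assume y: "y \<in> {y \<in> hat_pts \<Omega>. p y \<in> V}"
      have sc: "\<forall>T t. vb_directed T \<longrightarrow> is_lub_in UNIV T t \<longrightarrow> t \<in> V \<longrightarrow> T \<inter> V \<noteq> {}"
        using V unfolding scott_open_def by blast
      have "(\<lambda>h. h y) ` S \<inter> V \<noteq> {}"
        by (rule sc[rule_format, OF vb_directed_image_eval[OF S(2)] p]) (use y in simp)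
      then obtain h where "h \<in> S" "h y \<in> V" by blast
      then show "y \<in> (\<Union>h\<in>S. {y \<in> hat_pts \<Omega>. h y \<in> V})" using y by blast
    next
      fix y assume "y \<in> (\<Union>h\<in>S. {y \<in> hat_pts \<Omega>. h y \<in> V})"
      then obtain h where h: "h \<in> S" "y \<in> hat_pts \<Omega>" "h y \<in> V" by blast
      have "h y \<le> p y" using is_lub_inD(2)[OF p] h(1) by blast
      then show "y \<in> {y \<in> hat_pts \<Omega>. p y \<in> V}" using up h(2,3) by blast
    qed
    also have "\<dots> = \<Union>(hatO \<Omega> ` J ` S)" using J by auto
    also have "\<dots> = hatO \<Omega> (ideal_gen \<Omega> (J ` S))"
      using hatO_ideal_gen[OF vb JS] by simp
    finally show "\<exists>I\<in>Idl \<Omega>. {y \<in> hat_pts \<Omega>. p y \<in> V} = hatO \<Omega> I"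
      using ideal_gen_in_Idl[OF vb JS] by blast
  qed
qed

lemma fun_space_directed_lub_pointwise:
  assumes vb: "viable_base X \<Omega>" and bc: "bc_domain_with_basis (D0::'d::order_bot set)"
    and S: "S \<subseteq> fun_space \<Omega>" "vb_directed (S :: ('a set set set \<Rightarrow> 'd) set)"
    and s: "is_lub_in (fun_space \<Omega>) S s"
  shows "is_lub_in UNIV ((\<lambda>h. h y) ` S) (s y)"
proof -
  define p where "p y = vb_lub ((\<lambda>h. h y) ` S)" for y
  have p: "is_lub_in UNIV ((\<lambda>h. h y) ` S) (p y)" for y
    using bc_domainD(1)[OF bc vb_directed_image_eval[OF S(2)]] vb_lub_eqI unfolding p_def by metis
  have p_fun: "p \<in> fun_space \<Omega>" by (rule pointwise_lub_in_fun_space[OF vb S p])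
  have "s = p"
  proof (rule order.antisym)
    show "s \<le> p"
      using is_lub_inD(3)[OF s p_fun] is_lub_inD(2)[OF p] by (auto intro: le_funI)
    show "p \<le> s"
      using is_lub_inD(3)[OF p] is_lub_inD(2)[OF s] by (auto intro!: le_funI dest: le_funD)
  qed
  then show ?thesis using p by simp
qed

definition dominated_opens :: "'a set set \<Rightarrow> ('a set set set \<Rightarrow> 'd::order) set \<Rightarrow> 'd \<Rightarrow> 'a set set" where
  "dominated_opens \<Omega> S b = {V \<in> \<Omega>. \<exists>h\<in>S. \<forall>y\<in>hatO \<Omega> (vb_down \<Omega> V). b \<le> h y}"

lemma dominated_opens_in_Idl:
  assumes vb: "viable_base X \<Omega>" and S: "vb_directed S"
  shows "dominated_opens \<Omega> S b \<in> Idl \<Omega>"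
proof (rule IdlI)
  show "dominated_opens \<Omega> S b \<subseteq> \<Omega>" unfolding dominated_opens_def by blast
  show "{} \<in> dominated_opens \<Omega> S b"
    using S viable_baseD(1)[OF vb] hatO_vb_down_empty[OF vb]
    unfolding dominated_opens_def vb_directed_def by blast
  show "V \<in> dominated_opens \<Omega> S b" if "A \<in> dominated_opens \<Omega> S b" "V \<in> \<Omega>" "V \<subseteq> A" for A V
    using that hatO_vb_down_mono[OF vb] unfolding dominated_opens_def by blast
  show "\<exists>Z\<in>dominated_opens \<Omega> S b. A \<subseteq> Z \<and> B \<subseteq> Z"
    if AB: "A \<in> dominated_opens \<Omega> S b" "B \<in> dominated_opens \<Omega> S b" for A B
  proof -
    obtain h1 h2 where h: "h1 \<in> S" "\<forall>y\<in>hatO \<Omega> (vb_down \<Omega> A). b \<le> h1 y" "A \<in> \<Omega>"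
      "h2 \<in> S" "\<forall>y\<in>hatO \<Omega> (vb_down \<Omega> B). b \<le> h2 y" "B \<in> \<Omega>"
      using AB unfolding dominated_opens_def by blast
    obtain h3 where h3: "h3 \<in> S" "h1 \<le> h3" "h2 \<le> h3" using S h(1,4) unfolding vb_directed_def by blast
    have "b \<le> h3 y" if "y \<in> hatO \<Omega> (vb_down \<Omega> (A \<union> B))" for y
      using that h(2,5) h3(2,3) unfolding hatO_vb_down_Un[OF vb h(3,6)]
      by (auto dest!: le_funD[of _ _ y] intro: order.trans)
    then have "A \<union> B \<in> dominated_opens \<Omega> S b"
      unfolding dominated_opens_def using h3(1) viable_baseD(3)[OF vb h(3,6)] by blast
    then show ?thesis by blast
  qed
qed

text \<open>If \<open>W\<close> were not dominated, a prime filter containing \<open>W\<close> and avoiding the dominated opens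
  gives a point \<open>y\<^sub>0 \<in> O_{\<down>W}\<close>; some \<open>h \<in> S\<close> has \<open>b \<ll> h y\<^sub>0\<close>, and by continuity of \<open>h\<close> this
  holds on a basic neighbourhood \<open>O_{\<down>V\<^sub>0}\<close> of \<open>y\<^sub>0\<close>, making \<open>V\<^sub>0\<close> dominated.\<close>
lemma fun_space_directed_lub_dominates:
  assumes vb: "viable_base X \<Omega>" and bc: "bc_domain_with_basis (D0::'d::order_bot set)"
    and S: "S \<subseteq> fun_space \<Omega>" "vb_directed (S :: ('a set set set \<Rightarrow> 'd) set)"
    and s: "is_lub_in (fun_space \<Omega>) S s"
    and W: "W \<in> \<Omega>" and b: "\<forall>y\<in>hatO \<Omega> (vb_down \<Omega> W). way_below_in UNIV b (s y)"
  shows "\<exists>h\<in>S. \<forall>y\<in>hatO \<Omega> (vb_down \<Omega> W). b \<le> h y"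
proof -
  let ?K = "dominated_opens \<Omega> S b"
  have "W \<in> ?K"
  proof (rule ccontr)
    assume "W \<notin> ?K"
    with prime_filter_separation[OF vb W dominated_opens_in_Idl[OF vb S(2)]]
    obtain P where P: "prime_filter_on \<Omega> P" "W \<in> P" "P \<inter> ?K = {}" by blast
    define y0 where "y0 = filter_point \<Omega> P"
    have y0: "y0 \<in> hat_pts \<Omega>" unfolding y0_def by (rule filter_point_in_hat_pts[OF vb P(1)])
    have "y0 \<in> hatO \<Omega> (vb_down \<Omega> W)"
      unfolding y0_def using filter_point_in_hatO_vb_down_iff[OF vb P(1) W] P(2) by blast
    then have "way_below_in UNIV b (s y0)" using b by blast
    then obtain h where h: "h \<in> S" "way_below_in UNIV b (h y0)"
      using way_below_directed_lub[OF bc vb_directed_image_eval[OF S(2)]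
          fun_space_directed_lub_pointwise[OF vb bc S s]] by blast
    obtain I where I: "I \<in> Idl \<Omega>" "{y \<in> hat_pts \<Omega>. way_below_in UNIV b (h y)} = hatO \<Omega> I"
      using S(1) h(1) scott_open_way_above[OF bc, of b] unfolding fun_space_def hat_cont_def by blast
    have "I \<in> y0" using I(2) y0 h(2) unfolding hatO_def by blast
    then obtain V0 where V0: "V0 \<in> I" "V0 \<in> P" unfolding y0_def filter_point_def by blast
    have "vb_down \<Omega> V0 \<subseteq> I" unfolding vb_down_def using IdlD(3)[OF I(1) V0(1)] by blast
    then have "\<forall>y\<in>hatO \<Omega> (vb_down \<Omega> V0). b \<le> h y"
      using hatO_mono[OF _ I(1)] I(2) way_below_imp_le by blast
    then have "V0 \<in> ?K" unfolding dominated_opens_def using IdlD(1)[OF I(1)] V0(1) h(1) by blast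
    then show False using V0(2) P(3) by blast
  qed
  then show ?thesis unfolding dominated_opens_def by blast
qed


section \<open>Way-below step functions\<close>

definition basis_approximants :: "'d::order set \<Rightarrow> 'j set \<Rightarrow> ('j \<Rightarrow> 'd) \<Rightarrow> ('j \<Rightarrow> 'd) set" where
  "basis_approximants D0 J b = {c. \<forall>j\<in>J. c j \<in> D0 \<and> way_below_in UNIV (c j) (b j)}"

lemma basis_approximants_consistent:
  assumes "consistent_family \<Omega> J W b" "c \<in> basis_approximants D0 J b"
  shows "consistent_family \<Omega> J W c"
  using assms consistent_family_mono way_below_imp_le unfolding basis_approximants_def by blast

lemma basis_approximants_nonempty:
  assumes "bc_domain_with_basis (D0::'d::order_bot set)"
  obtains c where "c \<in> basis_approximants D0 J (b::'j \<Rightarrow> 'd)"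
proof -
  have "\<forall>j. \<exists>c. c \<in> D0 \<and> way_below_in UNIV c (b j)"
    using vb_directedD(1)[OF bc_domainD(2)[OF assms]] by blast
  from choice[OF this] obtain c where "\<forall>j. c j \<in> D0 \<and> way_below_in UNIV (c j) (b j)"
    by blast
  then show ?thesis using that unfolding basis_approximants_def by blast
qed

lemma step_join_approximants_directed:
  assumes bc: "bc_domain_with_basis (D0::'d::order_bot set)"
    and cons: "consistent_family \<Omega> J W (b::'j \<Rightarrow> 'd)"
  shows "vb_directed ((\<lambda>c. step_join \<Omega> J W c) ` basis_approximants D0 J b)"
  unfolding vb_directed_def
proof (intro conjI ballI)
  show "(\<lambda>c. step_join \<Omega> J W c) ` basis_approximants D0 J b \<noteq> {}"
    using basis_approximants_nonempty[OF bc] by blast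
  fix h1 h2 assume "h1 \<in> (\<lambda>c. step_join \<Omega> J W c) ` basis_approximants D0 J b"
    "h2 \<in> (\<lambda>c. step_join \<Omega> J W c) ` basis_approximants D0 J b"
  then obtain c1 c2 where c: "c1 \<in> basis_approximants D0 J b" "c2 \<in> basis_approximants D0 J b"
    and h: "h1 = step_join \<Omega> J W c1" "h2 = step_join \<Omega> J W c2" by blast
  have "\<forall>j\<in>J. \<exists>e. e \<in> D0 \<and> way_below_in UNIV e (b j) \<and> c1 j \<le> e \<and> c2 j \<le> e"
  proof
    fix j assume "j \<in> J"
    then have "c1 j \<in> {e \<in> D0. way_below_in UNIV e (b j)}" "c2 j \<in> {e \<in> D0. way_below_in UNIV e (b j)}"
      using c unfolding basis_approximants_def by blast+
    then show "\<exists>e. e \<in> D0 \<and> way_below_in UNIV e (b j) \<and> c1 j \<le> e \<and> c2 j \<le> e"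
      using vb_directedD(2)[OF bc_domainD(2)[OF bc]] by blast
  qed
  from bchoice[OF this] obtain c3
    where c3: "\<forall>j\<in>J. c3 j \<in> D0 \<and> way_below_in UNIV (c3 j) (b j) \<and> c1 j \<le> c3 j \<and> c2 j \<le> c3 j"
    by blast
  then have c3B: "c3 \<in> basis_approximants D0 J b" unfolding basis_approximants_def by blast
  have "h1 \<le> step_join \<Omega> J W c3" "h2 \<le> step_join \<Omega> J W c3"
    unfolding h using c3 step_join_mono[OF bc basis_approximants_consistent[OF cons] basis_approximants_consistent[OF cons c3B]] c
    by blast+
  then show "\<exists>z\<in>(\<lambda>c. step_join \<Omega> J W c) ` basis_approximants D0 J b. h1 \<le> z \<and> h2 \<le> z"
    using c3B by blast
qed

text \<open>Each \<open>b\<^sub>j\<close> is the join of its basis approximants, and these can be varied one index at a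
  time, starting from any fixed approximant.\<close>
lemma step_join_approximants_lub:
  assumes vb: "viable_base X \<Omega>" and bc: "bc_domain_with_basis (D0::'d::order_bot set)"
    and fin: "finite J" and WJ: "\<forall>j\<in>J. W j \<in> \<Omega>" and cons: "consistent_family \<Omega> J W (b::'j \<Rightarrow> 'd)"
  shows "is_lub_in (fun_space \<Omega>) ((\<lambda>c. step_join \<Omega> J W c) ` basis_approximants D0 J b) (step_join \<Omega> J W b)"
proof (rule is_lub_inI)
  note consC = basis_approximants_consistent[OF cons]
  show "step_join \<Omega> J W b \<in> fun_space \<Omega>" by (rule step_join_in_fun_space[OF vb bc fin WJ cons])
  show "h \<le> step_join \<Omega> J W b" if "h \<in> (\<lambda>c. step_join \<Omega> J W c) ` basis_approximants D0 J b" for h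
    using that step_join_mono[OF bc consC cons] way_below_imp_le unfolding basis_approximants_def by blast
  fix u assume u: "\<And>h. h \<in> (\<lambda>c. step_join \<Omega> J W c) ` basis_approximants D0 J b \<Longrightarrow> h \<le> u"
  obtain c0 where c0: "c0 \<in> basis_approximants D0 J b" using basis_approximants_nonempty[OF bc] .
  have "e \<le> u y" if j: "j \<in> J" "y \<in> hatO \<Omega> (vb_down \<Omega> (W j))" and e: "e \<in> {c \<in> D0. way_below_in UNIV c (b j)}" for j y e
  proof -
    have c': "c0(j := e) \<in> basis_approximants D0 J b" using c0 e unfolding basis_approximants_def by auto
    have "e \<le> step_join \<Omega> J W (c0(j := e)) y" using step_join_ge[OF bc consC[OF c'] j] by simp
    also have "\<dots> \<le> u y" using u c' by (blast dest: le_funD)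
    finally show ?thesis .
  qed
  then have "b j \<le> u y" if "j \<in> J" "y \<in> hatO \<Omega> (vb_down \<Omega> (W j))" for j y
    using is_lub_inD(3)[OF bc_domainD(3)[OF bc]] that by blast
  then show "step_join \<Omega> J W b \<le> u" by (rule step_join_le_fun[OF bc cons])
qed

lemma step_join_approximant_way_below:
  assumes bc: "bc_domain_with_basis (D0::'d::order_bot set)"
    and fin: "finite J" and cons: "consistent_family \<Omega> J W (b::'j \<Rightarrow> 'd)"
    and c: "c \<in> basis_approximants D0 J b"
  shows "way_below_in UNIV (step_join \<Omega> J W c y) (step_join \<Omega> J W b y)"
proof (rule way_below_finite_lub[OF _ _ step_join_is_lub[OF bc basis_approximants_consistent[OF cons c]]])
  show "finite (c ` active_indices \<Omega> J W y)" using fin unfolding active_indices_def by simp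
  fix a assume "a \<in> c ` active_indices \<Omega> J W y"
  then obtain j where j: "j \<in> J" "y \<in> hatO \<Omega> (vb_down \<Omega> (W j))" "a = c j"
    unfolding active_indices_def by blast
  then show "way_below_in UNIV a (step_join \<Omega> J W b y)"
    using c step_join_ge[OF bc cons j(1,2)] way_below_mono[OF order.refl]
    unfolding basis_approximants_def by blast
qed

lemma fun_space_way_below_step_join_pointwise:
  assumes vb: "viable_base X \<Omega>" and bc: "bc_domain_with_basis (D0::'d::order_bot set)"
    and fin: "finite J" and WJ: "\<forall>j\<in>J. W j \<in> \<Omega>" and cons: "consistent_family \<Omega> J W (b::'j \<Rightarrow> 'd)"
    and f: "way_below_in (fun_space \<Omega>) f (step_join \<Omega> J W b)"
  shows "way_below_in UNIV (f y) (step_join \<Omega> J W b y)"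
proof -
  have "(\<lambda>c. step_join \<Omega> J W c) ` basis_approximants D0 J b \<subseteq> fun_space \<Omega>"
    using step_join_in_fun_space[OF vb bc fin WJ basis_approximants_consistent[OF cons]] by blast
  then obtain c where c: "c \<in> basis_approximants D0 J b" "f \<le> step_join \<Omega> J W c"
    using way_below_inD[OF f _ step_join_approximants_directed[OF bc cons]
        step_join_approximants_lub[OF vb bc fin WJ cons] order.refl] by blast
  then show ?thesis
    using step_join_approximant_way_below[OF bc fin cons c(1)] way_below_mono[OF _ _ order.refl]
    by (blast dest: le_funD)
qed


lemma way_below_step_join_iff:
  assumes vb: "viable_base X \<Omega>" and bc: "bc_domain_with_basis (D0::'d::order_bot set)"
    and finI: "finite I" and WI: "\<forall>i\<in>I. W i \<in> \<Omega>" and consI: "consistent_family \<Omega> I W (b::'i \<Rightarrow> 'd)"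
    and finJ: "finite J" and WJ: "\<forall>j\<in>J. W' j \<in> \<Omega>" and consJ: "consistent_family \<Omega> J W' (b'::'j \<Rightarrow> 'd)"
    and U: "\<forall>i\<in>I. U i \<in> \<Omega> \<and>
      hatO \<Omega> (vb_down \<Omega> (U i)) = {y \<in> hat_pts \<Omega>. way_below_in UNIV (b i) (step_join \<Omega> J W' b' y)}"
  shows "way_below_in (fun_space \<Omega>) (step_join \<Omega> I W b) (step_join \<Omega> J W' b') \<longleftrightarrow> (\<forall>i\<in>I. W i \<subseteq> U i)"
    (is "way_below_in _ ?f ?g \<longleftrightarrow> _")
proof
  assume fg: "way_below_in (fun_space \<Omega>) ?f ?g"
  show "\<forall>i\<in>I. W i \<subseteq> U i"
  proof
    fix i assume i: "i \<in> I"
    have "way_below_in UNIV (b i) (?g y)" if "y \<in> hatO \<Omega> (vb_down \<Omega> (W i))" for y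
      using step_join_ge[OF bc consI i that] fun_space_way_below_step_join_pointwise[OF vb bc finJ WJ consJ fg]
        way_below_mono[OF _ _ order.refl] by blast
    then have "hatO \<Omega> (vb_down \<Omega> (W i)) \<subseteq> hatO \<Omega> (vb_down \<Omega> (U i))"
      using U i unfolding hatO_def by blast
    then show "W i \<subseteq> U i" using hatO_vb_down_subsetD[OF vb] WI U i by blast
  qed
next
  assume WU: "\<forall>i\<in>I. W i \<subseteq> U i"
  show "way_below_in (fun_space \<Omega>) ?f ?g"
    unfolding way_below_in_def
  proof (intro conjI allI impI)
    show f: "?f \<in> fun_space \<Omega>" by (rule step_join_in_fun_space[OF vb bc finI WI consI])
    show "?g \<in> fun_space \<Omega>" by (rule step_join_in_fun_space[OF vb bc finJ WJ consJ])
    fix S s assume S: "S \<subseteq> fun_space \<Omega>" "vb_directed S" and s: "is_lub_in (fun_space \<Omega>) S s" "?g \<le> s"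
    have "\<exists>h\<in>S. \<forall>y\<in>hatO \<Omega> (vb_down \<Omega> (W i)). b i \<le> h y" if i: "i \<in> I" for i
    proof (rule fun_space_directed_lub_dominates[OF vb bc S s(1)])
      show "W i \<in> \<Omega>" using WI i by blast
      have "hatO \<Omega> (vb_down \<Omega> (W i)) \<subseteq> hatO \<Omega> (vb_down \<Omega> (U i))"
        using hatO_vb_down_mono[OF vb] WU U i by blast
      then show "\<forall>y\<in>hatO \<Omega> (vb_down \<Omega> (W i)). way_below_in UNIV (b i) (s y)"
        using U i s(2) way_below_mono[OF order.refl] unfolding hatO_def by (blast dest: le_funD)
    qed
    then obtain h where h: "\<And>i. i \<in> I \<Longrightarrow> h i \<in> S \<and> (\<forall>y\<in>hatO \<Omega> (vb_down \<Omega> (W i)). b i \<le> h i y)"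
      by metis
    obtain d where d: "d \<in> S" "\<forall>i\<in>I. h i \<le> d"
      using directed_finite_upper_bound[OF S(2), of "h ` I"] finI h by auto
    have "?f \<le> d"
      using h d(2) by (intro step_join_le_fun[OF bc consI]) (blast dest: le_funD intro: order.trans)
    then show "\<exists>d\<in>S. ?f \<le> d" using d(1) by blast
  qed
qed

theorem mainTheorem17:
  fixes X :: "'a topology" and \<Omega>0 :: "'a set set"
    and D0 :: "'d::order_bot set"
    and I :: "'i set" and W :: "'i \<Rightarrow> 'a set" and b :: "'i \<Rightarrow> 'd"
    and J :: "'j set" and W' :: "'j \<Rightarrow> 'a set" and b' :: "'j \<Rightarrow> 'd"
    and f g :: "'a set set set \<Rightarrow> 'd"
  assumes "viable_base X \<Omega>0"
    and "bc_domain_with_basis D0"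
    and "finite I" and "\<forall>i\<in>I. W i \<in> \<Omega>0 \<and> b i \<in> D0" and "consistent_family \<Omega>0 I W b"
    and "finite J" and "\<forall>j\<in>J. W' j \<in> \<Omega>0 \<and> b' j \<in> D0" and "consistent_family \<Omega>0 J W' b'"
    and "f = step_join \<Omega>0 I W b"
    and "g = step_join \<Omega>0 J W' b'"
  shows "(\<forall>i\<in>I. \<exists>U\<in>\<Omega>0. hatO \<Omega>0 (vb_down \<Omega>0 U) =
                        {y \<in> hat_pts \<Omega>0. way_below_in UNIV (b i) (g y)})
         \<and> (\<forall>U. (\<forall>i\<in>I. U i \<in> \<Omega>0 \<and> hatO \<Omega>0 (vb_down \<Omega>0 (U i)) =
                        {y \<in> hat_pts \<Omega>0. way_below_in UNIV (b i) (g y)}) \<longrightarrow>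
               (way_below_in (fun_space \<Omega>0) f g \<longleftrightarrow> (\<forall>i\<in>I. W i \<subseteq> U i)))"
proof -
  \<comment> \<open>The values need not be basis elements.\<close>
  have WI: "\<forall>i\<in>I. W i \<in> \<Omega>0" and WJ: "\<forall>j\<in>J. W' j \<in> \<Omega>0" using assms(4,7) by blast+
  have "\<exists>U\<in>\<Omega>0. hatO \<Omega>0 (vb_down \<Omega>0 U) = {y \<in> hat_pts \<Omega>0. way_below_in UNIV c (g y)}" for c
  proof -
    have "\<forall>x\<in>{d. way_below_in UNIV c d}. \<forall>z. x \<le> z \<longrightarrow> z \<in> {d. way_below_in UNIV c d}"
      using way_below_mono[OF order.refl] by blast
    from step_join_preimage_upset[OF assms(1,2,6) WJ assms(8) this] show ?thesis
      unfolding assms(10) by auto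
  qed
  then show ?thesis
    using way_below_step_join_iff[OF assms(1,2,3) WI assms(5,6) WJ assms(8)]
    unfolding assms(9,10) by blast
qed

end
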